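(* Let $S\subseteq\mathbb{F}_2^{27}$ be the linear subspace spanned by the six vectors (written as bit strings, coordinate $1$ leftmost, coordinate $27$ rightmost) $\xi^1 = 100010001010101010100011110$, $\xi^2 = 101010111001100000001010101$, $\xi^3 = 011001100111100111100110011$, $\xi^4 = 000111100000011001100001111$, $\xi^5 = 000000011111111000011111111$, $\xi^6 = 000000000000000111111111111$, and let $Q:\mathbb{F}_2^{27}\to\mathbb{F}_2$ be the quadratic form $Q(x)= x_{1}x_{2} + x_{1}x_{3} + x_{1}x_{8} + x_{2}x_{4} + x_{2}x_{8} + x_{2}x_{16} + x_{3}x_{4} + x_{3}x_{8} + x_{3}x_{16} + x_{4}x_{8} + x_{8}x_{16}$ (arithmetic mod $2$). Define the (normalized) 27-qubit states $|S\rangle = \frac{1}{\sqrt{|S|}}\sum_{x\in S}|x\rangle$ and $|Q,S\rangle=\frac{1}{\sqrt{|S|}}\sum_{x\in S}(-1)^{Q(x)}|x\rangle$. Then $|S\rangle$ and $|Q,S\rangle$ are stabilizer states which are local unitary (LU) equivalent but not local Clifford (LC) equivalent. In particular, the LU-LC conjecture (every two LU equivalent stabilizer states are LC equivalent) is false.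
   Context: Pauli matrices $X,Y,Z$; the Pauli group $\mathcal{G}$ is generated by them. An $n$-qubit stabilizer state is the unique common $+1$ eigenvector of an Abelian subgroup of $\mathcal{G}^{\otimes n}$ of cardinality $2^n$ not containing $-I^{\otimes n}$. A single-qubit Clifford operator is a $2\times 2$ unitary $U$ with $U\mathcal{G}U^\dagger=\mathcal{G}$. Two $n$-qubit states $|\psi_0\rangle,|\psi_1\rangle$ are LU equivalent if $\bigotimes_{j=1}^n U_j|\psi_0\rangle=|\psi_1\rangle$ for some single-qubit unitaries $U_j$, and LC equivalent if this holds with all $U_j$ Clifford operators. $|x\rangle$ denotes the computational basis state labelled by $x\in\mathbb{F}_2^{27}$. *)

theory Defs
  imports Complex_Main
begin

text \<open>An n-qubit state is a complex function on bit strings (bool lists) which vanishes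
outside the strings of length n; coordinate j of a string (j = 0,...,n-1) is qubit j+1.
A single-qubit operator is a 2x2 complex matrix indexed by bool (False = |0>, True = |1>),
an n-qubit operator is a matrix indexed by bit strings.\<close>

type_synonym qstate = "bool list \<Rightarrow> complex"
type_synonym qop1 = "bool \<Rightarrow> bool \<Rightarrow> complex"
type_synonym qop = "bool list \<Rightarrow> bool list \<Rightarrow> complex"

definition bitstrings :: "nat \<Rightarrow> bool list set" where
  "bitstrings n = {xs. length xs = n}"

definition is_state :: "nat \<Rightarrow> qstate \<Rightarrow> bool" where
  "is_state n \<psi> \<longleftrightarrow> (\<forall>x. length x \<noteq> n \<longrightarrow> \<psi> x = 0)"

definition apply_op :: "nat \<Rightarrow> qop \<Rightarrow> qstate \<Rightarrow> qstate" where
  "apply_op n A \<psi> = (\<lambda>y. if length y = n then (\<Sum>x\<in>bitstrings n. A y x * \<psi> x) else 0)"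

definition mult_op :: "nat \<Rightarrow> qop \<Rightarrow> qop \<Rightarrow> qop" where
  "mult_op n A B = (\<lambda>y z. \<Sum>x\<in>bitstrings n. A y x * B x z)"

definition kron :: "nat \<Rightarrow> (nat \<Rightarrow> qop1) \<Rightarrow> qop" where
  "kron n Us = (\<lambda>y x. if length y = n \<and> length x = n
                        then (\<Prod>j<n. Us j (y ! j) (x ! j)) else 0)"

definition mult1 :: "qop1 \<Rightarrow> qop1 \<Rightarrow> qop1" where
  "mult1 A B = (\<lambda>a c. \<Sum>b\<in>(UNIV::bool set). A a b * B b c)"

definition adj1 :: "qop1 \<Rightarrow> qop1" where
  "adj1 A = (\<lambda>a b. cnj (A b a))"

definition id1 :: qop1 where
  "id1 = (\<lambda>a b. if a = b then 1 else 0)"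

definition id_op :: "nat \<Rightarrow> qop" where
  "id_op n = kron n (\<lambda>_. id1)"

definition pauliX :: qop1 where
  "pauliX = (\<lambda>a b. if a \<noteq> b then 1 else 0)"

definition pauliY :: qop1 where
  "pauliY = (\<lambda>a b. if a = b then 0 else if a then \<i> else - \<i>)"

definition pauliZ :: qop1 where
  "pauliZ = (\<lambda>a b. if a = b then (if a then -1 else 1) else 0)"

text \<open>The single-qubit Pauli group: the group generated by X, Y, Z (a finite set of
invertible matrices, so closure under multiplication already yields the generated group).\<close>
inductive_set pauli_group1 :: "qop1 set" where
  genX: "pauliX \<in> pauli_group1"
| genY: "pauliY \<in> pauli_group1"
| genZ: "pauliZ \<in> pauli_group1"
| mult: "A \<in> pauli_group1 \<Longrightarrow> B \<in> pauli_group1 \<Longrightarrow> mult1 A B \<in> pauli_group1"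

definition pauli_group :: "nat \<Rightarrow> qop set" where
  "pauli_group n = {kron n Ps | Ps. \<forall>j<n. Ps j \<in> pauli_group1}"

definition unitary1 :: "qop1 \<Rightarrow> bool" where
  "unitary1 U \<longleftrightarrow> mult1 U (adj1 U) = id1 \<and> mult1 (adj1 U) U = id1"

definition clifford1 :: "qop1 \<Rightarrow> bool" where
  "clifford1 U \<longleftrightarrow> unitary1 U \<and>
     (\<lambda>P. mult1 U (mult1 P (adj1 U))) ` pauli_group1 = pauli_group1"

definition stabilizer_state :: "nat \<Rightarrow> qstate \<Rightarrow> bool" where
  "stabilizer_state n \<psi> \<longleftrightarrow> is_state n \<psi> \<and> \<psi> \<noteq> (\<lambda>_. 0) \<and>
     (\<exists>G. G \<subseteq> pauli_group n \<and>
          id_op n \<in> G \<and>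
          (\<forall>A\<in>G. \<forall>B\<in>G. mult_op n A B \<in> G) \<and>
          (\<forall>A\<in>G. \<exists>B\<in>G. mult_op n A B = id_op n) \<and>
          (\<forall>A\<in>G. \<forall>B\<in>G. mult_op n A B = mult_op n B A) \<and>
          card G = 2 ^ n \<and>
          (\<lambda>y x. - id_op n y x) \<notin> G \<and>
          (\<forall>A\<in>G. apply_op n A \<psi> = \<psi>) \<and>
          (\<forall>\<phi>. is_state n \<phi> \<and> (\<forall>A\<in>G. apply_op n A \<phi> = \<phi>) \<longrightarrow>
                (\<exists>c. \<phi> = (\<lambda>x. c * \<psi> x))))"

definition LU_equiv :: "nat \<Rightarrow> qstate \<Rightarrow> qstate \<Rightarrow> bool" where
  "LU_equiv n \<psi>0 \<psi>1 \<longleftrightarrow>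
     (\<exists>Us. (\<forall>j<n. unitary1 (Us j)) \<and> apply_op n (kron n Us) \<psi>0 = \<psi>1)"

definition LC_equiv :: "nat \<Rightarrow> qstate \<Rightarrow> qstate \<Rightarrow> bool" where
  "LC_equiv n \<psi>0 \<psi>1 \<longleftrightarrow>
     (\<exists>Us. (\<forall>j<n. clifford1 (Us j)) \<and> apply_op n (kron n Us) \<psi>0 = \<psi>1)"

definition bits :: "string \<Rightarrow> bool list" where
  "bits s = map (\<lambda>c. c = CHR ''1'') s"

definition xi :: "bool list list" where
  "xi = map bits
    [''100010001010101010100011110'',
     ''101010111001100000001010101'',
     ''011001100111100111100110011'',
     ''000111100000011001100001111'',
     ''000000011111111000011111111'',
     ''000000000000000111111111111'']"

definition f2_span :: "nat \<Rightarrow> bool list list \<Rightarrow> bool list set" where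
  "f2_span n vs = {foldr (\<lambda>(b, v) acc. if b then map2 (\<noteq>) v acc else acc)
                      (zip cs vs) (replicate n False) | cs. length cs = length vs}"

definition S27 :: "bool list set" where
  "S27 = f2_span 27 xi"

text \<open>Q(x) with x_k = x ! (k-1); Q(x)=1 iff an odd number of the monomials are 1.\<close>
definition Q27 :: "bool list \<Rightarrow> bool" where
  "Q27 x = odd (length (filter id
     [x!0 \<and> x!1, x!0 \<and> x!2, x!0 \<and> x!7, x!1 \<and> x!3,
      x!1 \<and> x!7, x!1 \<and> x!15, x!2 \<and> x!3, x!2 \<and> x!7,
      x!2 \<and> x!15, x!3 \<and> x!7, x!7 \<and> x!15]))"

definition ket_S :: qstate where
  "ket_S = (\<lambda>x. if x \<in> S27 then 1 / complex_of_real (sqrt (real (card S27))) else 0)"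

definition ket_QS :: qstate where
  "ket_QS = (\<lambda>x. if x \<in> S27
                 then (-1) ^ (if Q27 x then 1 else 0) / complex_of_real (sqrt (real (card S27)))
                 else 0)"

end

theory Submission
  imports Defs
begin

text \<open>
  \<open>|S\<rangle>\<close> is stabilized by the operators \<open>X\<^sup>a Z\<^sup>b\<close> with \<open>a \<in> S\<close> and \<open>b \<in> S\<^sup>\<perp>\<close>, and
  \<open>|Q,S\<rangle>\<close> is obtained from it by the diagonal Clifford operator \<open>diag ((-1)\<^sup>Q\<^sup>(\<^sup>x\<^sup>))\<close>, because \<open>Q\<close> is
  a quadratic form; so both are stabilizer states. Phase gates \<open>diag (1, cis (\<pi> c\<^sub>j / 4))\<close> with
  \<open>\<Sum>\<^sub>j c\<^sub>j x\<^sub>j \<equiv> 4 Q(x) (mod 8)\<close> on \<open>S\<close> map \<open>|S\<rangle>\<close> to \<open>|Q,S\<rangle>\<close>.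

  Suppose local Clifford operators \<open>U\<^sub>j\<close> map \<open>|S\<rangle>\<close> to \<open>|Q,S\<rangle>\<close>. Every qubit lies in the support
  of some \<open>b \<in> S\<^sup>\<perp>\<close> of weight at most 6, while nonzero codewords of \<open>S\<close> have weight at least 12;
  conjugating the stabilizer \<open>Z\<^sup>b\<close> by \<open>\<Otimes>U\<^sub>j\<close> then shows that each \<open>U\<^sub>j Z U\<^sub>j\<^sup>\<dagger>\<close> is diagonal,
  i.e.\ each \<open>U\<^sub>j\<close> is monomial, and its two nonzero entries differ by a fourth root of unity.
  Hence \<open>(-1)\<^sup>Q\<^sup>(\<^sup>y\<^sup>) = \<Prod>\<^sub>j d\<^sub>j(y\<^sub>j)\<close> on \<open>S\<close> with \<open>d\<^sub>j(1)\<^sup>4 = d\<^sub>j(0)\<^sup>4\<close>. Multiplying these identities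
  over a family of codewords that covers every coordinate a multiple of four times, but meets
  \<open>Q = 1\<close> an odd number of times, gives \<open>-1 = 1\<close>.
\<close>

lemma card_bitstrings: "card (bitstrings n) = 2 ^ n"
proof -
  have "bitstrings n = {xs. set xs \<subseteq> (UNIV::bool set) \<and> length xs = n}" by (auto simp: bitstrings_def)
  thus ?thesis using card_lists_length_eq[of "UNIV::bool set" n] by (simp add: card_UNIV_bool)
qed

lemma finite_bitstrings [simp]: "finite (bitstrings n)"
  using card_bitstrings[of n] by (intro card_ge_0_finite) simp

lemma bitstrings_Suc: "bitstrings (Suc n) = Cons False ` bitstrings n \<union> Cons True ` bitstrings n"
proof
  show "bitstrings (Suc n) \<subseteq> Cons False ` bitstrings n \<union> Cons True ` bitstrings n"
  proof
    fix x assume "x \<in> bitstrings (Suc n)"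
    then obtain b xs where "x = b # xs" "length xs = n" by (auto simp: bitstrings_def length_Suc_conv)
    thus "x \<in> Cons False ` bitstrings n \<union> Cons True ` bitstrings n" by (cases b) (auto simp: bitstrings_def)
  qed
qed (auto simp: bitstrings_def)

lemma sum_bitstrings_prod:
  fixes f :: "nat \<Rightarrow> bool \<Rightarrow> 'a::comm_semiring_1"
  shows "(\<Sum>x\<in>bitstrings n. \<Prod>j<n. f j (x!j)) = (\<Prod>j<n. f j False + f j True)"
proof (induction n arbitrary: f)
  case 0
  have "bitstrings 0 = {[]}" by (auto simp: bitstrings_def)
  thus ?case by simp
next
  case (Suc n)
  have "(\<Sum>x\<in>bitstrings (Suc n). \<Prod>j<Suc n. f j (x!j))
      = (\<Sum>x\<in>Cons False ` bitstrings n. \<Prod>j<Suc n. f j (x!j))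
        + (\<Sum>x\<in>Cons True ` bitstrings n. \<Prod>j<Suc n. f j (x!j))"
    unfolding bitstrings_Suc by (rule sum.union_disjoint) auto
  also have "\<dots> = (\<Sum>x\<in>bitstrings n. f 0 False * (\<Prod>j<n. f (Suc j) (x!j)))
                 + (\<Sum>x\<in>bitstrings n. f 0 True * (\<Prod>j<n. f (Suc j) (x!j)))"
    by (simp add: sum.reindex prod.lessThan_Suc_shift del: prod.lessThan_Suc)
  also have "\<dots> = (f 0 False + f 0 True) * (\<Prod>j<n. f (Suc j) False + f (Suc j) True)"
    using Suc[of "\<lambda>j. f (Suc j)"] by (simp add: sum_distrib_left[symmetric] distrib_right)
  also have "\<dots> = (\<Prod>j<Suc n. f j False + f j True)"
    by (simp add: prod.lessThan_Suc_shift del: prod.lessThan_Suc)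
  finally show ?case .
qed

lemma mult_op_kron: "mult_op n (kron n A) (kron n B) = kron n (\<lambda>j. mult1 (A j) (B j))"
proof (intro ext)
  fix y z
  show "mult_op n (kron n A) (kron n B) y z = kron n (\<lambda>j. mult1 (A j) (B j)) y z"
  proof (cases "length y = n \<and> length z = n")
    case True
    have "mult_op n (kron n A) (kron n B) y z
        = (\<Sum>x\<in>bitstrings n. \<Prod>j<n. A j (y!j) (x!j) * B j (x!j) (z!j))"
      unfolding mult_op_def kron_def using True
      by (intro sum.cong) (auto simp: bitstrings_def prod.distrib)
    also have "\<dots> = (\<Prod>j<n. A j (y!j) False * B j False (z!j) + A j (y!j) True * B j True (z!j))"
      by (rule sum_bitstrings_prod)
    also have "\<dots> = kron n (\<lambda>j. mult1 (A j) (B j)) y z"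
      using True by (simp add: kron_def mult1_def UNIV_bool add.commute)
    finally show ?thesis .
  next
    case False
    then show ?thesis by (auto simp: mult_op_def kron_def bitstrings_def intro!: sum.neutral)
  qed
qed

lemma apply_op_mult_op: "apply_op n A (apply_op n B \<psi>) = apply_op n (mult_op n A B) \<psi>"
proof (intro ext)
  fix y
  show "apply_op n A (apply_op n B \<psi>) y = apply_op n (mult_op n A B) \<psi> y"
  proof (cases "length y = n")
    case True
    have "apply_op n A (apply_op n B \<psi>) y
        = (\<Sum>x\<in>bitstrings n. \<Sum>z\<in>bitstrings n. A y x * B x z * \<psi> z)"
      using True by (auto simp: apply_op_def bitstrings_def sum_distrib_left mult.assoc intro!: sum.cong)
    also have "\<dots> = (\<Sum>z\<in>bitstrings n. \<Sum>x\<in>bitstrings n. A y x * B x z * \<psi> z)"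
      by (rule sum.swap)
    also have "\<dots> = apply_op n (mult_op n A B) \<psi> y"
      using True by (simp add: apply_op_def mult_op_def sum_distrib_right)
    finally show ?thesis .
  qed (simp add: apply_op_def)
qed

lemma kron_cong: "(\<And>j. j < n \<Longrightarrow> A j = B j) \<Longrightarrow> kron n A = kron n B"
  by (auto simp: fun_eq_iff kron_def intro!: prod.cong)

lemma kron_scaled: "kron n (\<lambda>j u v. c j * M j u v) = (\<lambda>y x. (\<Prod>j<n. c j) * kron n M y x)"
  by (simp add: fun_eq_iff kron_def prod.distrib)

section \<open>Linear algebra over \<open>\<bbbF>\<^sub>2\<close>\<close>

definition bxor :: "bool list \<Rightarrow> bool list \<Rightarrow> bool list" where
  "bxor u v = map2 (\<noteq>) u v"

lemma length_bxor [simp]: "length (bxor u v) = min (length u) (length v)"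
  by (simp add: bxor_def)

lemma nth_bxor [simp]: "j < length u \<Longrightarrow> j < length v \<Longrightarrow> bxor u v ! j = (u!j \<noteq> v!j)"
  by (simp add: bxor_def)

lemma bxor_commute: "bxor u v = bxor v u"
  by (auto simp: bxor_def list_eq_iff_nth_eq)

lemma bxor_cancel_right: "length y = length a \<Longrightarrow> bxor (bxor y a) a = y"
  by (auto simp: list_eq_iff_nth_eq)

lemma bxor_self: "bxor a a = replicate (length a) False"
  by (simp add: list_eq_iff_nth_eq)

lemma bxor_zero_right: "length y = n \<Longrightarrow> bxor y (replicate n False) = y"
  by (simp add: list_eq_iff_nth_eq)

lemma bxor_zero_left: "length y = n \<Longrightarrow> bxor (replicate n False) y = y"
  by (simp add: list_eq_iff_nth_eq)

definition bdot :: "bool list \<Rightarrow> bool list \<Rightarrow> bool" where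
  "bdot b x = odd (length (filter id (map2 (\<and>) b x)))"

lemma bdot_Nil [simp]: "bdot [] x = False" "bdot b [] = False"
  by (simp_all add: bdot_def)

lemma bdot_Cons [simp]: "bdot (b # bs) (x # xs) = ((b \<and> x) \<noteq> bdot bs xs)"
  by (cases b; cases x) (simp_all add: bdot_def)

lemma bdot_commute: "bdot b x = bdot x b"
proof (induction b arbitrary: x)
  case (Cons a b) then show ?case by (cases x) (auto simp: conj_commute)
qed simp

lemma bdot_bxor_left: "length b = length b' \<Longrightarrow> bdot (bxor b b') x = (bdot b x \<noteq> bdot b' x)"
proof (induction b arbitrary: b' x)
  case (Cons a b)
  then obtain c b'' where "b' = c # b''" by (cases b') auto
  with Cons show ?case by (cases x) (auto simp: bxor_def)
qed (simp add: bxor_def)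

lemma bdot_bxor_right: "length x = length x' \<Longrightarrow> bdot b (bxor x x') = (bdot b x \<noteq> bdot b x')"
  using bdot_bxor_left[of x x' b] by (simp add: bdot_commute)

lemma bdot_zero_left [simp]: "bdot (replicate n False) x = False"
proof (induction n arbitrary: x)
  case (Suc n) then show ?case by (cases x) auto
qed simp

lemma bdot_zero_right [simp]: "bdot x (replicate n False) = False"
  using bdot_zero_left bdot_commute by metis

lemma bdot_unit_vector:
  "length b = m \<Longrightarrow> k < m \<Longrightarrow> bdot b ((replicate m False)[k := True]) = b ! k"
proof (induction b arbitrary: m k)
  case (Cons c b)
  then obtain m' where "m = Suc m'" by auto
  with Cons show ?case by (cases k) auto
qed simp

lemma bdot_iff_odd_card: "bdot b x = odd (card {j. j < length b \<and> j < length x \<and> b!j \<and> x!j})"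
  unfolding bdot_def length_filter_conv_card
  by (rule arg_cong[where f="\<lambda>A. odd (card A)"]) auto

lemma bdot_single_overlap:
  assumes "length b = length z" "i < length b" "b ! i"
    and overlap: "\<And>j. j < length b \<Longrightarrow> b ! j \<Longrightarrow> z ! j \<Longrightarrow> j = i"
  shows "bdot b z = z ! i"
proof -
  let ?A = "{j. j < length b \<and> j < length z \<and> b!j \<and> z!j}"
  have "?A \<subseteq> {i}" using overlap by blast
  moreover have "z ! i \<longleftrightarrow> i \<in> ?A" using assms(1-3) by simp
  ultimately have "?A = (if z ! i then {i} else {})" by auto
  then show ?thesis by (simp add: bdot_iff_odd_card)
qed

definition hamming_weight :: "bool list \<Rightarrow> nat" where
  "hamming_weight x = length (filter id x)"

lemma hamming_weight_mono:
  "length x = length y \<Longrightarrow> (\<And>i. i < length x \<Longrightarrow> x!i \<Longrightarrow> y!i) \<Longrightarrow> hamming_weight x \<le> hamming_weight y"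
  unfolding hamming_weight_def length_filter_conv_card by (rule card_mono) auto

definition parity_sign :: "bool \<Rightarrow> complex" where
  "parity_sign b = (if b then -1 else 1)"

lemma parity_sign_simps [simp]:
  "parity_sign False = 1" "parity_sign True = -1" "parity_sign b * parity_sign b = 1"
  "parity_sign b \<noteq> 0"
  by (simp_all add: parity_sign_def)

lemma prod_parity_sign:
  "length b = n \<Longrightarrow> length x = n \<Longrightarrow> (\<Prod>j<n. parity_sign (b!j \<and> x!j)) = parity_sign (bdot b x)"
proof (induction b arbitrary: x n)
  case (Cons c b)
  then obtain z x' n' where x: "x = z # x'" "n = Suc n'" by (cases x) auto
  with Cons show ?case
    by (simp add: prod.lessThan_Suc_shift parity_sign_def del: prod.lessThan_Suc)
qed simp

definition f2_comb :: "nat \<Rightarrow> bool list \<Rightarrow> bool list list \<Rightarrow> bool list" where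
  "f2_comb n cs vs = foldr (\<lambda>(b, v) acc. if b then map2 (\<noteq>) v acc else acc) (zip cs vs) (replicate n False)"

lemma f2_span_eq: "f2_span n vs = {f2_comb n cs vs | cs. length cs = length vs}"
  by (simp add: f2_span_def f2_comb_def)

lemma f2_comb_Nil [simp]: "f2_comb n [] vs = replicate n False" "f2_comb n cs [] = replicate n False"
  by (simp_all add: f2_comb_def)

lemma f2_comb_Cons [simp]:
  "f2_comb n (c # cs) (v # vs) = (if c then bxor v (f2_comb n cs vs) else f2_comb n cs vs)"
  by (simp add: f2_comb_def bxor_def)

lemma length_f2_comb [simp]: "\<forall>v\<in>set vs. length v = n \<Longrightarrow> length (f2_comb n cs vs) = n"
proof (induction vs arbitrary: cs)
  case (Cons v vs) then show ?case by (cases cs) auto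
qed simp

lemma nth_f2_comb:
  "\<forall>v\<in>set vs. length v = n \<Longrightarrow> j < n \<Longrightarrow> length cs = length vs \<Longrightarrow>
    f2_comb n cs vs ! j = bdot cs (map (\<lambda>v. v!j) vs)"
proof (induction vs arbitrary: cs)
  case (Cons v vs)
  then obtain c cs' where "cs = c # cs'" by (cases cs) auto
  with Cons show ?case by simp
qed simp

lemma bxor_f2_comb:
  "\<forall>v\<in>set vs. length v = n \<Longrightarrow> length cs = length vs \<Longrightarrow> length ds = length vs \<Longrightarrow>
    bxor (f2_comb n cs vs) (f2_comb n ds vs) = f2_comb n (bxor cs ds) vs"
  by (rule nth_equalityI) (simp_all add: nth_f2_comb bdot_bxor_left)

lemma f2_comb_zero: "\<forall>v\<in>set vs. length v = n \<Longrightarrow> f2_comb n (replicate (length vs) False) vs = replicate n False"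
  by (rule nth_equalityI) (simp_all add: nth_f2_comb)

lemma f2_span_generator:
  assumes "\<forall>v\<in>set vs. length v = n" "k < length vs"
  shows "vs ! k \<in> f2_span n vs"
proof -
  let ?e = "(replicate (length vs) False)[k := True]"
  have "f2_comb n ?e vs = vs ! k"
    using assms by (intro nth_equalityI) (simp_all add: nth_f2_comb bdot_commute bdot_unit_vector)
  then show ?thesis unfolding f2_span_eq by (intro CollectI exI[of _ ?e]) simp
qed

definition f2_subspace :: "nat \<Rightarrow> bool list set \<Rightarrow> bool" where
  "f2_subspace n S \<longleftrightarrow> S \<subseteq> bitstrings n \<and> replicate n False \<in> S \<and> (\<forall>a\<in>S. \<forall>b\<in>S. bxor a b \<in> S)"

lemma f2_subspace_span:
  assumes "\<forall>v\<in>set vs. length v = n"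
  shows "f2_subspace n (f2_span n vs)"
  unfolding f2_subspace_def f2_span_eq
proof (intro conjI ballI)
  show "{f2_comb n cs vs |cs. length cs = length vs} \<subseteq> bitstrings n"
    using assms by (auto simp: bitstrings_def)
  show "replicate n False \<in> {f2_comb n cs vs |cs. length cs = length vs}"
    using f2_comb_zero[OF assms] by (intro CollectI exI[of _ "replicate (length vs) False"]) simp
  fix a b assume "a \<in> {f2_comb n cs vs |cs. length cs = length vs}" "b \<in> {f2_comb n cs vs |cs. length cs = length vs}"
  then obtain cs ds where "a = f2_comb n cs vs" "length cs = length vs" "b = f2_comb n ds vs" "length ds = length vs"
    by blast
  then show "bxor a b \<in> {f2_comb n cs vs |cs. length cs = length vs}"
    using bxor_f2_comb[OF assms] by (intro CollectI exI[of _ "bxor cs ds"]) simp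
qed

lemma bdot_f2_comb_orthogonal:
  assumes "\<forall>v\<in>set vs. length v = n" "length x = n" "\<forall>v\<in>set vs. \<not> bdot v x"
  shows "\<not> bdot (f2_comb n cs vs) x"
  using assms
proof (induction vs arbitrary: cs)
  case (Cons v vs)
  then show ?case by (cases cs) (simp_all add: bdot_bxor_left)
qed simp

lemma orthogonal_f2_span:
  assumes "\<forall>u\<in>set us. length u = n" "\<forall>v\<in>set vs. length v = n"
    and "\<forall>u\<in>set us. \<forall>v\<in>set vs. \<not> bdot u v"
    and "a \<in> f2_span n us" "b \<in> f2_span n vs"
  shows "\<not> bdot a b"
proof -
  obtain cs ds where a: "a = f2_comb n cs us" and b: "b = f2_comb n ds vs"
    using assms(4,5) by (auto simp: f2_span_eq)
  have "\<not> bdot v a" if "v \<in> set vs" for v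
    using bdot_f2_comb_orthogonal[OF assms(1), of v cs] assms(2,3) that
    by (simp add: a bdot_commute)
  then show ?thesis
    using bdot_f2_comb_orthogonal[OF assms(2), of a ds] assms(1) by (simp add: a b bdot_commute)
qed

lemma card_f2_span_independent:
  assumes lengths: "\<forall>v\<in>set vs. length v = n"
    and independent: "\<And>cs. length cs = length vs \<Longrightarrow> f2_comb n cs vs = replicate n False \<Longrightarrow>
                        cs = replicate (length vs) False"
  shows "card (f2_span n vs) = 2 ^ length vs"
proof -
  have "inj_on (\<lambda>cs. f2_comb n cs vs) (bitstrings (length vs))"
  proof (rule inj_onI)
    fix cs ds assume "cs \<in> bitstrings (length vs)" "ds \<in> bitstrings (length vs)"
      and "f2_comb n cs vs = f2_comb n ds vs"
    then have l: "length cs = length vs" "length ds = length vs"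
      and "f2_comb n (bxor cs ds) vs = replicate n False"
      using bxor_f2_comb[OF lengths, of cs ds] bxor_self[of "f2_comb n ds vs"] lengths
      by (simp_all add: bitstrings_def)
    then have "bxor cs ds = replicate (length vs) False" using independent by simp
    then show "cs = ds" using l by (simp add: list_eq_iff_nth_eq)
  qed
  moreover have "f2_span n vs = (\<lambda>cs. f2_comb n cs vs) ` bitstrings (length vs)"
  proof
    show "f2_span n vs \<subseteq> (\<lambda>cs. f2_comb n cs vs) ` bitstrings (length vs)"
      by (auto simp: f2_span_eq bitstrings_def)
  qed (auto simp: f2_span_eq bitstrings_def)
  ultimately show ?thesis by (simp add: card_image card_bitstrings)
qed

definition pauli_xz1 :: "bool \<Rightarrow> bool \<Rightarrow> qop1" where
  "pauli_xz1 a b = (\<lambda>u v. if u = (v \<noteq> a) then parity_sign (b \<and> v) else 0)"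

lemma mult1_pauli_xz1:
  "mult1 (pauli_xz1 a b) (pauli_xz1 a' b') = (\<lambda>u v. parity_sign (b \<and> a') * pauli_xz1 (a \<noteq> a') (b \<noteq> b') u v)"
  by (cases a; cases b; cases a'; cases b') (auto simp: fun_eq_iff pauli_xz1_def mult1_def UNIV_bool)

lemma mult1_scaled: "mult1 (\<lambda>u v. c * A u v) (\<lambda>u v. d * B u v) = (\<lambda>u v. (c * d) * mult1 A B u v)"
  by (simp add: fun_eq_iff mult1_def sum_distrib_left mult_ac)

lemma complex_root4_cases: "(c::complex) ^ 4 = 1 \<Longrightarrow> c = 1 \<or> c = -1 \<or> c = \<i> \<or> c = - \<i>"
proof -
  assume "c ^ 4 = 1"
  moreover have "(c - 1) * (c + 1) * (c - \<i>) * (c + \<i>) = c ^ 4 - 1"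
    by (simp add: algebra_simps power4_eq_xxxx power2_eq_square)
  ultimately have "c - 1 = 0 \<or> c + 1 = 0 \<or> c - \<i> = 0 \<or> c + \<i> = 0"
    by (simp only: mult_eq_0_iff diff_self) blast
  then show ?thesis by (metis eq_iff_diff_eq_0 eq_neg_iff_add_eq_0)
qed

lemma pauli_xz1_in_pauli_group1: "pauli_xz1 a b \<in> pauli_group1"
proof -
  have "pauli_xz1 False False = mult1 pauliX pauliX" "pauli_xz1 True False = pauliX"
    "pauli_xz1 False True = pauliZ" "pauli_xz1 True True = mult1 pauliX pauliZ"
    by (auto simp: fun_eq_iff pauli_xz1_def pauliX_def pauliZ_def mult1_def UNIV_bool)
  then show ?thesis by (cases a; cases b) (auto intro: pauli_group1.intros)
qed

lemma scalar_in_pauli_group1: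
  assumes "c ^ 4 = 1" shows "(\<lambda>u v. c * id1 u v) \<in> pauli_group1"
proof -
  have XX: "mult1 pauliX pauliX \<in> pauli_group1" and XZ: "mult1 pauliX pauliZ \<in> pauli_group1"
    and XYZ: "mult1 (mult1 pauliX pauliY) pauliZ \<in> pauli_group1"
    by (auto intro: pauli_group1.intros)
  have "mult1 pauliX pauliX = (\<lambda>u v. 1 * id1 u v)"
    and "mult1 (mult1 pauliX pauliZ) (mult1 pauliX pauliZ) = (\<lambda>u v. - 1 * id1 u v)"
    and "mult1 (mult1 pauliX pauliY) pauliZ = (\<lambda>u v. \<i> * id1 u v)"
    and "mult1 (mult1 (mult1 pauliX pauliZ) (mult1 pauliX pauliZ)) (mult1 (mult1 pauliX pauliY) pauliZ)
           = (\<lambda>u v. - \<i> * id1 u v)"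
    by (auto simp: fun_eq_iff mult1_def pauliX_def pauliY_def pauliZ_def id1_def UNIV_bool)
  then show ?thesis
    using complex_root4_cases[OF assms] XX XZ XYZ
    by (metis pauli_group1.mult)
qed

lemma pauli_group1_subset_scaled_pauli_xz1:
  "M \<in> pauli_group1 \<Longrightarrow> \<exists>c a b. c ^ 4 = 1 \<and> M = (\<lambda>u v. c * pauli_xz1 a b u v)"
proof (induction rule: pauli_group1.induct)
  case genX
  have "pauliX = (\<lambda>u v. 1 * pauli_xz1 True False u v)" by (auto simp: fun_eq_iff pauliX_def pauli_xz1_def)
  then show ?case by (intro exI[of _ 1] exI[of _ True] exI[of _ False]) simp
next
  case genY
  have "pauliY = (\<lambda>u v. \<i> * pauli_xz1 True True u v)" by (auto simp: fun_eq_iff pauliY_def pauli_xz1_def)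
  then show ?case by (intro exI[of _ \<i>] exI[of _ True] exI[of _ True]) (simp add: power4_eq_xxxx)
next
  case genZ
  have "pauliZ = (\<lambda>u v. 1 * pauli_xz1 False True u v)" by (auto simp: fun_eq_iff pauliZ_def pauli_xz1_def)
  then show ?case by (intro exI[of _ 1] exI[of _ False] exI[of _ True]) simp
next
  case (mult A B)
  then obtain c a b d a' b' where "A = (\<lambda>u v. c * pauli_xz1 a b u v)" "c ^ 4 = 1"
    and "B = (\<lambda>u v. d * pauli_xz1 a' b' u v)" "d ^ 4 = 1"
    by blast
  then have "mult1 A B = (\<lambda>u v. (c * d * parity_sign (b \<and> a')) * pauli_xz1 (a \<noteq> a') (b \<noteq> b') u v)"
    and "(c * d * parity_sign (b \<and> a')) ^ 4 = 1"
    by (simp_all add: mult1_scaled mult1_pauli_xz1 mult_ac power_mult_distrib parity_sign_def)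
  then show ?case by blast
qed

lemma scaled_pauli_xz1_in_pauli_group1:
  assumes "c ^ 4 = 1" shows "(\<lambda>u v. c * pauli_xz1 a b u v) \<in> pauli_group1"
proof -
  have "(\<lambda>u v. c * pauli_xz1 a b u v) = mult1 (\<lambda>u v. c * id1 u v) (pauli_xz1 a b)"
    by (simp add: fun_eq_iff mult1_def id1_def UNIV_bool)
  then show ?thesis
    using scalar_in_pauli_group1[OF assms] pauli_xz1_in_pauli_group1 by (metis pauli_group1.mult)
qed

lemma pauli_group1_eq: "pauli_group1 = {(\<lambda>u v. c * pauli_xz1 a b u v) | c a b. c ^ 4 = 1}"
  using pauli_group1_subset_scaled_pauli_xz1 scaled_pauli_xz1_in_pauli_group1 by blast

lemma mult1_assoc: "mult1 (mult1 A B) C = mult1 A (mult1 B C)"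
  by (simp add: fun_eq_iff mult1_def UNIV_bool distrib_left distrib_right mult.assoc add_ac)

lemma mult1_id1 [simp]: "mult1 A id1 = A" "mult1 id1 A = A"
  by (simp_all add: fun_eq_iff mult1_def UNIV_bool id1_def)

definition conj1 :: "qop1 \<Rightarrow> qop1 \<Rightarrow> qop1" where
  "conj1 U P = mult1 U (mult1 P (adj1 U))"

lemma mult1_conj1: "unitary1 U \<Longrightarrow> mult1 (conj1 U P) U = mult1 U P"
  by (simp add: conj1_def unitary1_def mult1_assoc)

lemma conj1_id1: "unitary1 U \<Longrightarrow> conj1 U id1 = id1"
  by (simp add: conj1_def unitary1_def)

lemma clifford1_conj1_pauli: "clifford1 U \<Longrightarrow> P \<in> pauli_group1 \<Longrightarrow> conj1 U P \<in> pauli_group1"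
  unfolding clifford1_def conj1_def by blast

lemma unitary1_column_nonzero:
  assumes "unitary1 U" shows "\<exists>a. U a b \<noteq> 0"
proof -
  have "mult1 (adj1 U) U b b = 1" using assms by (simp add: unitary1_def id1_def)
  then show ?thesis by (rule contrapos_pp) (simp add: mult1_def adj1_def UNIV_bool)
qed

definition monomial1 :: "bool \<Rightarrow> qop1 \<Rightarrow> bool" where
  "monomial1 e U \<longleftrightarrow> (\<forall>u v. u \<noteq> (v \<noteq> e) \<longrightarrow> U u v = 0)"

lemma unitary1_monomial_nonzero:
  assumes "unitary1 U" "monomial1 e U" shows "U (v \<noteq> e) v \<noteq> 0"
proof -
  obtain a where "U a v \<noteq> 0" using unitary1_column_nonzero[OF assms(1)] by blast
  moreover from this have "a = (v \<noteq> e)" using assms(2) unfolding monomial1_def by blast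
  ultimately show ?thesis by simp
qed

lemma pauli_group1_monomial:
  assumes "M \<in> pauli_group1"
  shows "monomial1 (M True False \<noteq> 0) M" and "M (v \<noteq> (M True False \<noteq> 0)) v \<noteq> 0"
proof -
  obtain c a b where "c ^ 4 = 1" "M = (\<lambda>u v. c * pauli_xz1 a b u v)"
    using assms by (auto simp: pauli_group1_eq)
  moreover from this have "c \<noteq> 0" by auto
  ultimately show "monomial1 (M True False \<noteq> 0) M" "M (v \<noteq> (M True False \<noteq> 0)) v \<noteq> 0"
    by (auto simp: monomial1_def pauli_xz1_def)
qed

text \<open>If \<open>U Z U\<^sup>\<dagger>\<close> is diagonal, its diagonal entries are eigenvalues \<open>+1\<close> and \<open>-1\<close> of the
  two columns of \<open>U\<close>, which must therefore live in different rows.\<close>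
lemma unitary1_monomial_if_conj1_Z_diagonal:
  assumes U: "unitary1 U" and diag: "\<And>u v. u \<noteq> v \<Longrightarrow> conj1 U pauliZ u v = 0"
  shows "\<exists>e. monomial1 e U"
proof -
  let ?D = "conj1 U pauliZ"
  have eigen: "?D u u * U u v = parity_sign v * U u v" for u v
  proof -
    have "mult1 ?D U u v = mult1 U pauliZ u v" using mult1_conj1[OF U] by simp
    then show ?thesis using diag[of u "\<not> u"] by (cases u; cases v) (auto simp: mult1_def UNIV_bool pauliZ_def)
  qed
  obtain a where a: "U a False \<noteq> 0" using unitary1_column_nonzero[OF U] by blast
  obtain a' where a': "U a' True \<noteq> 0" using unitary1_column_nonzero[OF U] by blast
  have Da: "?D a a = 1" and Da': "?D a' a' = -1"
    using eigen[of a False, unfolded mult_cancel_right] eigen[of a' True, unfolded mult_cancel_right] a a'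
    by auto
  then have "a' = (\<not> a)" by (cases a; cases a') auto
  moreover have "U a True = 0" "U a' False = 0"
    using eigen[of a True] eigen[of a' False] Da Da' by auto
  ultimately have "monomial1 a U"
    unfolding monomial1_def by (metis (full_types))
  then show ?thesis ..
qed

text \<open>For a monomial Clifford operator, conjugating \<open>X\<close> gives a Pauli operator whose
  off-diagonal entry is the ratio of the two nonzero entries of \<open>U\<close>; it is a fourth root of unity.\<close>
lemma clifford1_monomial_ratio:
  assumes C: "clifford1 U" and M: "monomial1 e U"
  shows "U True (\<not> e) ^ 4 = U False e ^ 4"
proof -
  have U: "unitary1 U" using C by (simp add: clifford1_def)
  let ?V = "conj1 U pauliX"
  have "mult1 ?V U False (\<not> e) = mult1 U pauliX False (\<not> e)" using mult1_conj1[OF U] by simp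
  moreover have "U False (\<not> e) = 0" using M[unfolded monomial1_def, rule_format, of False "\<not> e"] by simp
  ultimately have key: "?V False True * U True (\<not> e) = U False e"
    by (cases e) (simp_all add: mult1_def UNIV_bool pauliX_def)
  have "U False e \<noteq> 0" using unitary1_monomial_nonzero[OF U M, of e] by simp
  then have "?V False True \<noteq> 0" using key by auto
  moreover have "?V \<in> pauli_group1" using clifford1_conj1_pauli[OF C pauli_group1.genX] .
  ultimately have "?V False True ^ 4 = 1"
    by (auto simp: pauli_group1_eq pauli_xz1_def parity_sign_def split: if_splits)
  then show ?thesis using key by (metis mult_1 power_mult_distrib)
qed

lemma apply_op_kron_monomial:
  assumes monomial: "\<And>j. j < n \<Longrightarrow> monomial1 (\<alpha>!j) (M j)"
    and "length \<alpha> = n" "length y = n"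
  shows "apply_op n (kron n M) \<psi> y = (\<Prod>j<n. M j (y!j) (y!j \<noteq> \<alpha>!j)) * \<psi> (bxor y \<alpha>)"
proof -
  let ?x = "bxor y \<alpha>"
  have x: "?x \<in> bitstrings n" using assms(2,3) by (simp add: bitstrings_def)
  have "kron n M y x = 0" if "x \<in> bitstrings n - {?x}" for x
  proof -
    from that have "x \<noteq> ?x" "length x = n" by (auto simp: bitstrings_def)
    then have "\<not> (\<forall>j<n. x!j = ?x!j)"
      using assms(2,3) nth_equalityI[of x ?x] by (auto simp del: nth_bxor)
    then obtain j where "j < n" "x!j \<noteq> ?x!j" by blast
    then have "y!j \<noteq> (x!j \<noteq> \<alpha>!j)" using assms(2,3) by auto
    then have "M j (y!j) (x!j) = 0" using monomial[OF \<open>j < n\<close>] unfolding monomial1_def by blast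
    then show ?thesis using \<open>j < n\<close> by (auto simp: kron_def)
  qed
  then have "apply_op n (kron n M) \<psi> y = kron n M y ?x * \<psi> ?x"
    using x assms(3) by (simp add: apply_op_def sum.remove)
  then show ?thesis using assms(2,3) by (simp add: kron_def)
qed

definition pauli_xz :: "nat \<Rightarrow> bool list \<Rightarrow> bool list \<Rightarrow> qop" where
  "pauli_xz n a b = kron n (\<lambda>j. pauli_xz1 (a!j) (b!j))"

lemma pauli_xz_in_pauli_group: "pauli_xz n a b \<in> pauli_group n"
  using pauli_xz1_in_pauli_group1 by (auto simp: pauli_xz_def pauli_group_def)

lemma id_op_eq_pauli_xz_zero: "id_op n = pauli_xz n (replicate n False) (replicate n False)"
proof -
  have "pauli_xz1 False False = id1" by (auto simp: fun_eq_iff pauli_xz1_def id1_def)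
  then show ?thesis unfolding pauli_xz_def id_op_def by (intro kron_cong) simp
qed

context
  fixes n :: nat and a b :: "bool list"
  assumes lengths: "length a = n" "length b = n"
begin

lemma pauli_xz_entry:
  "pauli_xz n a b y x = (if length y = n \<and> length x = n \<and> y = bxor x a then parity_sign (bdot b x) else 0)"
proof (cases "length y = n \<and> length x = n")
  case True
  show ?thesis
  proof (cases "y = bxor x a")
    case True': True
    have "pauli_xz n a b y x = (\<Prod>j<n. parity_sign (b!j \<and> x!j))"
      unfolding pauli_xz_def kron_def using True True' lengths
      by (auto simp: pauli_xz1_def intro!: prod.cong)
    then show ?thesis using True True' prod_parity_sign lengths by simp
  next
    case False
    then obtain j where "j < n" "y!j \<noteq> (x!j \<noteq> a!j)"
      using True lengths by (auto simp: list_eq_iff_nth_eq)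
    then have "(\<Prod>j<n. pauli_xz1 (a!j) (b!j) (y!j) (x!j)) = 0"
      by (intro prod_zero) (auto simp: pauli_xz1_def)
    then show ?thesis using True False by (simp add: pauli_xz_def kron_def)
  qed
qed (auto simp: pauli_xz_def kron_def)

lemma apply_op_pauli_xz:
  "length y = n \<Longrightarrow> apply_op n (pauli_xz n a b) \<psi> y = parity_sign (bdot b (bxor y a)) * \<psi> (bxor y a)"
  unfolding pauli_xz_def
  by (subst apply_op_kron_monomial[where \<alpha> = a])
     (use lengths in \<open>auto simp: monomial1_def pauli_xz1_def prod_parity_sign[symmetric] intro!: prod.cong\<close>)

lemma mult_op_pauli_xz:
  assumes "length a' = n" "length b' = n"
  shows "mult_op n (pauli_xz n a b) (pauli_xz n a' b')
       = (\<lambda>y x. parity_sign (bdot b a') * pauli_xz n (bxor a a') (bxor b b') y x)"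
proof -
  have "mult_op n (pauli_xz n a b) (pauli_xz n a' b')
      = kron n (\<lambda>j u v. parity_sign (b!j \<and> a'!j) * pauli_xz1 (a!j \<noteq> a'!j) (b!j \<noteq> b'!j) u v)"
    unfolding pauli_xz_def mult_op_kron mult1_pauli_xz1 ..
  also have "\<dots> = (\<lambda>y x. (\<Prod>j<n. parity_sign (b!j \<and> a'!j))
                              * kron n (\<lambda>j. pauli_xz1 (a!j \<noteq> a'!j) (b!j \<noteq> b'!j)) y x)"
    by (rule kron_scaled)
  also have "kron n (\<lambda>j. pauli_xz1 (a!j \<noteq> a'!j) (b!j \<noteq> b'!j)) = pauli_xz n (bxor a a') (bxor b b')"
    unfolding pauli_xz_def using assms lengths by (intro kron_cong) simp
  finally show ?thesis using assms lengths by (simp add: prod_parity_sign)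
qed

lemma pauli_xz_neq_minus_id_op: "pauli_xz n a b \<noteq> (\<lambda>y x. - id_op n y x)"
proof
  assume "pauli_xz n a b = (\<lambda>y x. - id_op n y x)"
  then have "pauli_xz n a b (replicate n False) (replicate n False) = -1"
    by (simp add: id_op_def kron_def id1_def)
  then show False using lengths by (simp add: pauli_xz_entry split: if_splits)
qed

end

lemma pauli_xz_inj:
  assumes "length a = n" "length b = n" "length a' = n" "length b' = n"
    and eq: "pauli_xz n a b = pauli_xz n a' b'"
  shows "a = a' \<and> b = b'"
proof
  have "pauli_xz n a b a (replicate n False) = 1"
    using assms(1,2) by (simp add: pauli_xz_entry bxor_zero_left)
  then have "pauli_xz n a' b' a (replicate n False) = 1" using eq by simp
  then have "a = bxor (replicate n False) a'"
    using assms(3,4) by (simp add: pauli_xz_entry split: if_splits)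
  then show aa: "a = a'" using bxor_zero_left[OF assms(3)] by simp
  show "b = b'"
  proof (rule nth_equalityI)
    fix k assume "k < length b"
    then have k: "k < n" using assms by simp
    let ?e = "(replicate n False)[k := True]"
    have "pauli_xz n a b (bxor ?e a) ?e = pauli_xz n a' b' (bxor ?e a) ?e" using eq by simp
    then have "bdot b ?e = bdot b' ?e" using assms aa by (simp add: pauli_xz_entry parity_sign_def split: if_splits)
    then show "b!k = b'!k" using bdot_unit_vector assms k by simp
  qed (use assms in simp)
qed

lemma pauli_group_vanishes: "A \<in> pauli_group n \<Longrightarrow> length y \<noteq> n \<or> length x \<noteq> n \<Longrightarrow> A y x = 0"
  by (auto simp: pauli_group_def kron_def)

lemma pauli_group_elim:
  assumes "A \<in> pauli_group n"
  obtains c a b where "c ^ 4 = 1" "length a = n" "length b = n" "A = (\<lambda>y x. c * pauli_xz n a b y x)"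
proof -
  obtain Ps where A: "A = kron n Ps" and Ps: "\<forall>j<n. Ps j \<in> pauli_group1"
    using assms by (auto simp: pauli_group_def)
  then have "\<forall>j<n. \<exists>c a b. c ^ 4 = 1 \<and> Ps j = (\<lambda>u v. c * pauli_xz1 a b u v)"
    unfolding pauli_group1_eq by blast
  then obtain c a b where cab: "\<forall>j<n. c j ^ 4 = 1 \<and> Ps j = (\<lambda>u v. c j * pauli_xz1 (a j) (b j) u v)"
    by metis
  let ?a = "map a [0..<n]" and ?b = "map b [0..<n]"
  have "A = kron n (\<lambda>j u v. c j * pauli_xz1 (a j) (b j) u v)"
    unfolding A using cab by (intro kron_cong) simp
  also have "\<dots> = (\<lambda>y x. (\<Prod>j<n. c j) * pauli_xz n ?a ?b y x)"
    unfolding kron_scaled pauli_xz_def by (simp cong: kron_cong)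
  finally have "A = (\<lambda>y x. (\<Prod>j<n. c j) * pauli_xz n ?a ?b y x)" .
  moreover have "(\<Prod>j<n. c j) ^ 4 = 1"
    using cab by (auto simp: prod_power_distrib intro!: prod.neutral)
  ultimately show ?thesis using that[of "\<Prod>j<n. c j" ?a ?b] by simp
qed

lemma scaled_pauli_xz_in_pauli_group:
  assumes "0 < n" "c ^ 4 = 1"
  shows "(\<lambda>y x. c * pauli_xz n a b y x) \<in> pauli_group n"
proof -
  have "(\<lambda>y x. c * pauli_xz n a b y x)
      = kron n (\<lambda>j u v. (if j = 0 then c else 1) * pauli_xz1 (a!j) (b!j) u v)"
    using assms(1) by (simp add: kron_scaled pauli_xz_def prod.delta')
  moreover have "(\<lambda>u v. (if j = 0 then c else 1) * pauli_xz1 (a!j) (b!j) u v) \<in> pauli_group1" for j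
    unfolding pauli_group1_eq using assms(2)
    by (intro CollectI exI[of _ "if j = 0 then c else 1"] exI[of _ "a!j"] exI[of _ "b!j"]) simp
  ultimately show ?thesis by (auto simp: pauli_group_def)
qed

section \<open>Stabilizer states of subspaces\<close>

definition uniform_state :: "bool list set \<Rightarrow> qstate" where
  "uniform_state S = (\<lambda>x. if x \<in> S then 1 / complex_of_real (sqrt (real (card S))) else 0)"

locale dual_subspaces =
  fixes n :: nat and S P :: "bool list set"
  assumes subspace_S: "f2_subspace n S" and subspace_P: "f2_subspace n P"
    and orthogonal: "\<And>a b. a \<in> S \<Longrightarrow> b \<in> P \<Longrightarrow> \<not> bdot b a"
    and annihilator_P: "\<And>y. length y = n \<Longrightarrow> (\<And>b. b \<in> P \<Longrightarrow> \<not> bdot b y) \<Longrightarrow> y \<in> S"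
    and card_S_P: "card S * card P = 2 ^ n"
begin

lemma length_S: "a \<in> S \<Longrightarrow> length a = n" and length_P: "b \<in> P \<Longrightarrow> length b = n"
  using subspace_S subspace_P by (auto simp: f2_subspace_def bitstrings_def)

lemma zero_in_S: "replicate n False \<in> S" and zero_in_P: "replicate n False \<in> P"
  using subspace_S subspace_P by (simp_all add: f2_subspace_def)

lemma bxor_in_S: "a \<in> S \<Longrightarrow> a' \<in> S \<Longrightarrow> bxor a a' \<in> S"
  and bxor_in_P: "b \<in> P \<Longrightarrow> b' \<in> P \<Longrightarrow> bxor b b' \<in> P"
  using subspace_S subspace_P by (simp_all add: f2_subspace_def)

lemma finite_S: "finite S"
  using subspace_S finite_subset[OF _ finite_bitstrings] by (auto simp: f2_subspace_def)

lemma bxor_in_S_iff: "a \<in> S \<Longrightarrow> length y = n \<Longrightarrow> bxor y a \<in> S \<longleftrightarrow> y \<in> S"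
  using bxor_in_S[of "bxor y a" a] bxor_in_S[of y a] bxor_cancel_right[of y a] length_S by auto

definition amplitude :: complex where
  "amplitude = 1 / complex_of_real (sqrt (real (card S)))"

lemma amplitude_nonzero: "amplitude \<noteq> 0"
  using finite_S zero_in_S by (auto simp: amplitude_def card_gt_0_iff)

lemma uniform_state_eq: "uniform_state S = (\<lambda>x. if x \<in> S then amplitude else 0)"
  unfolding uniform_state_def amplitude_def ..

lemma is_state_uniform_state: "is_state n (uniform_state S)"
  using length_S by (auto simp: is_state_def uniform_state_eq)

definition stabilizer_group :: "qop set" where
  "stabilizer_group = {pauli_xz n a b | a b. a \<in> S \<and> b \<in> P}"

lemma mult_op_stabilizer_group:
  assumes "a \<in> S" "b \<in> P" "a' \<in> S" "b' \<in> P"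
  shows "mult_op n (pauli_xz n a b) (pauli_xz n a' b') = pauli_xz n (bxor a a') (bxor b b')"
  using mult_op_pauli_xz[of a n b a' b'] assms orthogonal length_S length_P by simp

lemma card_stabilizer_group: "card stabilizer_group = 2 ^ n"
proof -
  have "inj_on (\<lambda>(a, b). pauli_xz n a b) (S \<times> P)"
  proof (rule inj_onI, clarify)
    fix a b a' b' assume "a \<in> S" "b \<in> P" "a' \<in> S" "b' \<in> P" "pauli_xz n a b = pauli_xz n a' b'"
    then show "a = a' \<and> b = b'" using pauli_xz_inj length_S length_P by blast
  qed
  moreover have "stabilizer_group = (\<lambda>(a, b). pauli_xz n a b) ` (S \<times> P)"
    by (auto simp: stabilizer_group_def)
  ultimately show ?thesis
    using card_S_P by (simp add: card_image card_cartesian_product)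
qed

lemma uniform_state_stabilized:
  assumes "a \<in> S" "b \<in> P"
  shows "apply_op n (pauli_xz n a b) (uniform_state S) = uniform_state S"
proof
  fix y
  show "apply_op n (pauli_xz n a b) (uniform_state S) y = uniform_state S y"
  proof (cases "length y = n")
    case True
    then show ?thesis
      using assms orthogonal[of "bxor y a" b] bxor_in_S_iff[of a y] length_S length_P
      by (simp add: apply_op_pauli_xz uniform_state_eq)
  qed (use length_S in \<open>auto simp: apply_op_def uniform_state_eq\<close>)
qed

text \<open>Translations by \<open>a \<in> S\<close> force a stabilized state to be constant on \<open>S\<close>;
  the sign flips \<open>Z\<^sup>b\<close>, \<open>b \<in> P\<close>, force it to vanish off \<open>S = P\<^sup>\<perp>\<close>.\<close>
lemma stabilized_state_unique:
  assumes "is_state n \<phi>" and fixed: "\<And>A. A \<in> stabilizer_group \<Longrightarrow> apply_op n A \<phi> = \<phi>"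
  shows "\<phi> = (\<lambda>x. (\<phi> (replicate n False) / amplitude) * uniform_state S x)"
proof
  fix y
  show "\<phi> y = \<phi> (replicate n False) / amplitude * uniform_state S y"
  proof (cases "length y = n")
    case False
    then show ?thesis using assms(1) length_S by (auto simp: is_state_def uniform_state_eq)
  next
    case True
    show ?thesis
    proof (cases "y \<in> S")
      case y: True
      have "pauli_xz n y (replicate n False) \<in> stabilizer_group"
        using y zero_in_P by (auto simp: stabilizer_group_def)
      then have "\<phi> y = apply_op n (pauli_xz n y (replicate n False)) \<phi> y" using fixed by simp
      also have "\<dots> = \<phi> (replicate n False)"
        using True by (simp add: apply_op_pauli_xz bxor_self)
      finally show ?thesis using y amplitude_nonzero by (simp add: uniform_state_eq)
    next
      case False
      then obtain b where b: "b \<in> P" "bdot b y" using annihilator_P[OF True] by blast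
      have "pauli_xz n (replicate n False) b \<in> stabilizer_group"
        using b zero_in_S by (auto simp: stabilizer_group_def)
      then have "\<phi> y = apply_op n (pauli_xz n (replicate n False) b) \<phi> y" using fixed by simp
      also have "\<dots> = - \<phi> y"
        using True b length_P by (simp add: apply_op_pauli_xz bxor_zero_right)
      finally show ?thesis using False by (simp add: uniform_state_eq)
    qed
  qed
qed

theorem stabilizer_state_uniform_state: "stabilizer_state n (uniform_state S)"
  unfolding stabilizer_state_def
proof (intro conjI exI[of _ stabilizer_group] ballI allI impI)
  show "is_state n (uniform_state S)" by (rule is_state_uniform_state)
  show "uniform_state S \<noteq> (\<lambda>_. 0)"
    using zero_in_S amplitude_nonzero by (auto simp: uniform_state_eq fun_eq_iff)
  show "stabilizer_group \<subseteq> pauli_group n"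
    by (auto simp: stabilizer_group_def pauli_xz_in_pauli_group)
  show "id_op n \<in> stabilizer_group"
    using zero_in_S zero_in_P by (auto simp: stabilizer_group_def id_op_eq_pauli_xz_zero)
  show "card stabilizer_group = 2 ^ n" by (rule card_stabilizer_group)
  show "(\<lambda>y x. - id_op n y x) \<notin> stabilizer_group"
    using pauli_xz_neq_minus_id_op length_S length_P by (fastforce simp: stabilizer_group_def)
  fix A B assume A: "A \<in> stabilizer_group"
  then obtain a b where ab: "A = pauli_xz n a b" "a \<in> S" "b \<in> P" by (auto simp: stabilizer_group_def)
  show "apply_op n A (uniform_state S) = uniform_state S"
    using ab uniform_state_stabilized by simp
  show "\<exists>B\<in>stabilizer_group. mult_op n A B = id_op n"
    using A ab mult_op_stabilizer_group[of a b a b] length_S length_P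
    by (auto simp: bxor_self id_op_eq_pauli_xz_zero)
  assume "B \<in> stabilizer_group"
  then obtain a' b' where ab': "B = pauli_xz n a' b'" "a' \<in> S" "b' \<in> P" by (auto simp: stabilizer_group_def)
  show "mult_op n A B \<in> stabilizer_group"
    using ab ab' by (auto simp: mult_op_stabilizer_group stabilizer_group_def intro: bxor_in_S bxor_in_P)
  show "mult_op n A B = mult_op n B A"
    using ab ab' by (simp add: mult_op_stabilizer_group bxor_commute)
next
  fix \<phi> assume "is_state n \<phi> \<and> (\<forall>A\<in>stabilizer_group. apply_op n A \<phi> = \<phi>)"
  then show "\<exists>c. \<phi> = (\<lambda>x. c * uniform_state S x)" using stabilized_state_unique by blast
qed

end

section \<open>Sign twists by quadratic forms\<close>

text \<open>Quadratic forms over \<open>\<bbbF>\<^sub>2\<close> are characterised by their polarisation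
  \<open>q (x + a) - q x - q a\<close> being linear in \<open>x\<close>.\<close>
definition quadratic_form :: "nat \<Rightarrow> (bool list \<Rightarrow> bool) \<Rightarrow> bool" where
  "quadratic_form n q \<longleftrightarrow> (\<exists>B. \<forall>a x. length a = n \<longrightarrow> length x = n \<longrightarrow>
      length (B a) = n \<and> q (bxor x a) = ((q x \<noteq> q a) \<noteq> bdot (B a) x))"

lemma quadratic_form_zero: "quadratic_form n q \<Longrightarrow> \<not> q (replicate n False)"
  by (auto simp: quadratic_form_def bxor_self dest!: spec[of _ "replicate n False"])

definition sign_twist :: "(bool list \<Rightarrow> bool) \<Rightarrow> qstate \<Rightarrow> qstate" where
  "sign_twist q \<psi> = (\<lambda>x. parity_sign (q x) * \<psi> x)"

definition sign_conj :: "nat \<Rightarrow> (bool list \<Rightarrow> bool) \<Rightarrow> qop \<Rightarrow> qop" where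
  "sign_conj n q A = (\<lambda>y x. if length y = n \<and> length x = n
                            then parity_sign (q y) * A y x * parity_sign (q x) else 0)"

lemma sign_conj_sign_conj:
  "(\<And>y x. length y \<noteq> n \<or> length x \<noteq> n \<Longrightarrow> A y x = 0) \<Longrightarrow> sign_conj n q (sign_conj n q A) = A"
  by (auto simp: fun_eq_iff sign_conj_def)

lemma mult_op_sign_conj: "mult_op n (sign_conj n q A) (sign_conj n q B) = sign_conj n q (mult_op n A B)"
proof (intro ext)
  fix y z
  show "mult_op n (sign_conj n q A) (sign_conj n q B) y z = sign_conj n q (mult_op n A B) y z"
  proof (cases "length y = n \<and> length z = n")
    case True
    then have "mult_op n (sign_conj n q A) (sign_conj n q B) y z
        = (\<Sum>x\<in>bitstrings n. parity_sign (q y) * (A y x * B x z) * parity_sign (q z))"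
      unfolding mult_op_def
      by (intro sum.cong) (auto simp: sign_conj_def bitstrings_def algebra_simps)
    also have "\<dots> = sign_conj n q (mult_op n A B) y z"
      using True by (simp add: sign_conj_def mult_op_def sum_distrib_left sum_distrib_right)
    finally show ?thesis .
  qed (auto simp: mult_op_def sign_conj_def)
qed

lemma sign_conj_id_op: "sign_conj n q (id_op n) = id_op n"
  by (auto simp: fun_eq_iff sign_conj_def id_op_eq_pauli_xz_zero pauli_xz_entry bxor_zero_right)

lemma sign_conj_uminus: "sign_conj n q (\<lambda>y x. - A y x) = (\<lambda>y x. - sign_conj n q A y x)"
  by (auto simp: fun_eq_iff sign_conj_def)

lemma apply_op_sign_conj:
  "apply_op n (sign_conj n q A) (sign_twist q \<psi>) = sign_twist q (apply_op n A \<psi>)"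
  by (auto simp: fun_eq_iff apply_op_def sign_conj_def sign_twist_def bitstrings_def
      sum_distrib_left mult_ac intro!: sum.cong)

lemma sign_twist_sign_twist [simp]: "sign_twist q (sign_twist q \<phi>) = \<phi>"
  by (simp add: sign_twist_def mult.assoc[symmetric])

lemma apply_op_sign_conj_fixed_iff:
  "apply_op n (sign_conj n q A) \<phi> = \<phi> \<longleftrightarrow> apply_op n A (sign_twist q \<phi>) = sign_twist q \<phi>"
proof -
  have eq: "apply_op n (sign_conj n q A) \<phi> = sign_twist q (apply_op n A (sign_twist q \<phi>))"
    using apply_op_sign_conj[of n q A "sign_twist q \<phi>"] by simp
  show ?thesis
  proof
    assume "apply_op n (sign_conj n q A) \<phi> = \<phi>"
    then have "sign_twist q (sign_twist q (apply_op n A (sign_twist q \<phi>))) = sign_twist q \<phi>"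
      unfolding eq by (rule arg_cong)
    then show "apply_op n A (sign_twist q \<phi>) = sign_twist q \<phi>" by simp
  qed (simp add: eq)
qed

lemma sign_conj_pauli_xz:
  assumes B: "\<forall>a x. length a = n \<longrightarrow> length x = n \<longrightarrow>
                length (B a) = n \<and> q (bxor x a) = ((q x \<noteq> q a) \<noteq> bdot (B a) x)"
    and "length a = n" "length b = n"
  shows "sign_conj n q (pauli_xz n a b) = (\<lambda>y x. parity_sign (q a) * pauli_xz n a (bxor b (B a)) y x)"
proof (intro ext)
  fix y x
  have "length (B a) = n" using B assms(2) by blast
  moreover have "length x = n \<Longrightarrow> q (bxor x a) = ((q x \<noteq> q a) \<noteq> bdot (B a) x)"
    using B assms(2) by blast
  ultimately show "sign_conj n q (pauli_xz n a b) y x = parity_sign (q a) * pauli_xz n a (bxor b (B a)) y x"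
    using assms(2,3)
    by (auto simp: sign_conj_def pauli_xz_entry bdot_bxor_left parity_sign_def)
qed

lemma sign_conj_pauli_group:
  assumes q: "quadratic_form n q" and A: "A \<in> pauli_group n"
  shows "sign_conj n q A \<in> pauli_group n"
proof -
  obtain B where B: "\<forall>a x. length a = n \<longrightarrow> length x = n \<longrightarrow>
                       length (B a) = n \<and> q (bxor x a) = ((q x \<noteq> q a) \<noteq> bdot (B a) x)"
    using q by (auto simp: quadratic_form_def)
  obtain c a b where c: "c ^ 4 = 1" and ab: "length a = n" "length b = n"
    and A_eq: "A = (\<lambda>y x. c * pauli_xz n a b y x)"
    using pauli_group_elim[OF A] .
  have "sign_conj n q A = (\<lambda>y x. c * sign_conj n q (pauli_xz n a b) y x)"
    unfolding A_eq by (auto simp: fun_eq_iff sign_conj_def)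
  also have "\<dots> = (\<lambda>y x. (c * parity_sign (q a)) * pauli_xz n a (bxor b (B a)) y x)"
    unfolding sign_conj_pauli_xz[OF B ab] by (simp add: mult.assoc)
  finally have "sign_conj n q A = (\<lambda>y x. (c * parity_sign (q a)) * pauli_xz n a (bxor b (B a)) y x)" .
  moreover have "(c * parity_sign (q a)) ^ 4 = 1"
    using c by (simp add: power_mult_distrib parity_sign_def)
  moreover have "sign_conj n q A = A" if "n = 0"
    using that A_eq quadratic_form_zero[OF q] by (auto simp: fun_eq_iff sign_conj_def pauli_xz_def kron_def)
  ultimately show ?thesis
    using A scaled_pauli_xz_in_pauli_group by (cases "n = 0") auto
qed

lemma minus_id_op_notin_sign_conj_image:
  assumes involutive: "\<And>A. A \<in> G \<Longrightarrow> sign_conj n q (sign_conj n q A) = A"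
    and "(\<lambda>y x. - id_op n y x) \<notin> G"
  shows "(\<lambda>y x. - id_op n y x) \<notin> sign_conj n q ` G"
proof
  assume "(\<lambda>y x. - id_op n y x) \<in> sign_conj n q ` G"
  then obtain A where minus: "(\<lambda>y x. - id_op n y x) = sign_conj n q A" and A: "A \<in> G"
    by (rule imageE)
  from minus have "sign_conj n q (\<lambda>y x. - id_op n y x) = sign_conj n q (sign_conj n q A)"
    by (rule arg_cong)
  then have "(\<lambda>y x. - id_op n y x) = A"
    using involutive[OF A] by (simp add: sign_conj_uminus sign_conj_id_op)
  then show False using assms(2) A by simp
qed

text \<open>The stabilizer group of the twisted state is the conjugate of the original one.\<close>
theorem stabilizer_state_sign_twist:
  assumes "stabilizer_state n \<psi>" and q: "quadratic_form n q"
  shows "stabilizer_state n (sign_twist q \<psi>)"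
proof -
  obtain G where G: "G \<subseteq> pauli_group n" "id_op n \<in> G" "\<forall>A\<in>G. \<forall>B\<in>G. mult_op n A B \<in> G"
    "\<forall>A\<in>G. \<exists>B\<in>G. mult_op n A B = id_op n" "\<forall>A\<in>G. \<forall>B\<in>G. mult_op n A B = mult_op n B A"
    "card G = 2 ^ n" "(\<lambda>y x. - id_op n y x) \<notin> G" "\<forall>A\<in>G. apply_op n A \<psi> = \<psi>"
    and unique: "\<forall>\<phi>. is_state n \<phi> \<and> (\<forall>A\<in>G. apply_op n A \<phi> = \<phi>) \<longrightarrow> (\<exists>c. \<phi> = (\<lambda>x. c * \<psi> x))"
    and \<psi>: "is_state n \<psi>" "\<psi> \<noteq> (\<lambda>_. 0)"
    using assms(1) unfolding stabilizer_state_def by blast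
  let ?conj = "sign_conj n q"
  have involutive: "?conj (?conj A) = A" if "A \<in> G" for A
    using that G(1) pauli_group_vanishes by (blast intro: sign_conj_sign_conj)
  show ?thesis
    unfolding stabilizer_state_def
  proof (intro conjI exI[of _ "?conj ` G"] ballI allI impI)
    show "is_state n (sign_twist q \<psi>)" using \<psi>(1) by (simp add: is_state_def sign_twist_def)
    show "sign_twist q \<psi> \<noteq> (\<lambda>_. 0)" using \<psi>(2) by (auto simp: sign_twist_def fun_eq_iff)
    show "?conj ` G \<subseteq> pauli_group n" using G(1) sign_conj_pauli_group[OF q] by blast
    show "id_op n \<in> ?conj ` G" using G(2) sign_conj_id_op by (metis image_eqI)
    have "inj_on ?conj G" by (rule inj_on_inverseI[where g = ?conj]) (rule involutive)
    then show "card (?conj ` G) = 2 ^ n" using G(6) by (simp add: card_image)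
    show "(\<lambda>y x. - id_op n y x) \<notin> ?conj ` G"
      using minus_id_op_notin_sign_conj_image[OF involutive G(7)] .
    fix A' B' assume "A' \<in> ?conj ` G"
    then obtain A where A: "A' = ?conj A" "A \<in> G" by (rule imageE)
    show "apply_op n A' (sign_twist q \<psi>) = sign_twist q \<psi>"
      using A G(8) by (simp add: apply_op_sign_conj)
    obtain B where "B \<in> G" "mult_op n A B = id_op n" using A(2) G(4) by blast
    then show "\<exists>B'\<in>?conj ` G. mult_op n A' B' = id_op n"
      using A(1) by (metis image_eqI mult_op_sign_conj sign_conj_id_op)
    assume "B' \<in> ?conj ` G"
    then obtain B where B: "B' = ?conj B" "B \<in> G" by (rule imageE)
    show "mult_op n A' B' \<in> ?conj ` G" using A B G(3) by (simp add: mult_op_sign_conj)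
    show "mult_op n A' B' = mult_op n B' A'" using A B G(5) by (simp add: mult_op_sign_conj)
  next
    fix \<phi> assume \<phi>: "is_state n \<phi> \<and> (\<forall>A'\<in>?conj ` G. apply_op n A' \<phi> = \<phi>)"
    then have "is_state n (sign_twist q \<phi>)" by (simp add: is_state_def sign_twist_def)
    moreover have "\<forall>A\<in>G. apply_op n A (sign_twist q \<phi>) = sign_twist q \<phi>"
      using \<phi> by (simp add: apply_op_sign_conj_fixed_iff[symmetric])
    ultimately obtain c where "sign_twist q \<phi> = (\<lambda>x. c * \<psi> x)" using unique by blast
    then have "sign_twist q (sign_twist q \<phi>) = sign_twist q (\<lambda>x. c * \<psi> x)" by (rule arg_cong)
    then show "\<exists>c. \<phi> = (\<lambda>x. c * sign_twist q \<psi> x)" by (auto simp: sign_twist_def mult_ac)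
  qed
qed

definition phase_gate :: "real \<Rightarrow> qop1" where
  "phase_gate t = (\<lambda>u v. if u = v then (if u then cis t else 1) else 0)"

lemma unitary1_phase_gate: "unitary1 (phase_gate t)"
  by (auto simp: unitary1_def mult1_def adj1_def phase_gate_def id1_def fun_eq_iff UNIV_bool
      cis_cnj cis_mult)

lemma prod_cis: "(\<Prod>j\<in>A. cis (f j)) = cis (\<Sum>j\<in>A. f j)"
  by (induction A rule: infinite_finite_induct) (simp_all add: cis_mult)

lemma apply_op_phase_gates:
  assumes "length y = n"
  shows "apply_op n (kron n (\<lambda>j. phase_gate (\<theta> j))) \<psi> y = cis (\<Sum>j<n. if y!j then \<theta> j else 0) * \<psi> y"
proof -
  have "apply_op n (kron n (\<lambda>j. phase_gate (\<theta> j))) \<psi> y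
      = (\<Prod>j<n. phase_gate (\<theta> j) (y!j) (y!j \<noteq> replicate n False ! j)) * \<psi> (bxor y (replicate n False))"
    by (rule apply_op_kron_monomial) (use assms in \<open>auto simp: monomial1_def phase_gate_def\<close>)
  also have "(\<Prod>j<n. phase_gate (\<theta> j) (y!j) (y!j \<noteq> replicate n False ! j))
           = (\<Prod>j<n. cis (if y!j then \<theta> j else 0))"
    by (intro prod.cong) (auto simp: phase_gate_def)
  finally show ?thesis
    using assms by (simp add: bxor_zero_right prod_cis)
qed

lemma LU_equiv_phase_gates:
  assumes "is_state n \<psi>"
  shows "LU_equiv n \<psi> (\<lambda>y. cis (\<Sum>j<n. if y!j then \<theta> j else 0) * \<psi> y)"
  unfolding LU_equiv_def
proof (intro exI[of _ "\<lambda>j. phase_gate (\<theta> j)"] conjI allI impI ext)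
  fix y
  show "apply_op n (kron n (\<lambda>j. phase_gate (\<theta> j))) \<psi> y = cis (\<Sum>j<n. if y!j then \<theta> j else 0) * \<psi> y"
    using assms apply_op_phase_gates by (cases "length y = n") (auto simp: apply_op_def is_state_def)
qed (rule unitary1_phase_gate)

section \<open>An obstruction to local Clifford equivalence\<close>

lemma apply_op_kron_conj1:
  assumes U: "\<forall>j<n. unitary1 (Us j)" and map: "apply_op n (kron n Us) \<psi> = \<phi>"
    and fixed: "apply_op n (kron n Ps) \<psi> = \<psi>"
  shows "apply_op n (kron n (\<lambda>j. conj1 (Us j) (Ps j))) \<phi> = \<phi>"
proof -
  have "kron n (\<lambda>j. mult1 (conj1 (Us j) (Ps j)) (Us j)) = kron n (\<lambda>j. mult1 (Us j) (Ps j))"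
    using U by (intro kron_cong) (simp add: mult1_conj1)
  then show ?thesis
    using map fixed by (metis apply_op_mult_op mult_op_kron)
qed

context dual_subspaces
begin

lemma sign_twist_uniform_state:
  "sign_twist q (uniform_state S) = (\<lambda>x. if x \<in> S then parity_sign (q x) * amplitude else 0)"
  by (simp add: sign_twist_def uniform_state_eq fun_eq_iff)

text \<open>A Pauli operator \<open>X\<^sup>\<alpha> Z\<^sup>\<beta>\<close> stabilizing the twisted state maps its support \<open>S\<close> to
  \<open>S + \<alpha>\<close>, so \<open>\<alpha> \<in> S\<close>.\<close>
lemma X_part_of_stabilizer_in_S:
  assumes R: "\<And>k. k < n \<Longrightarrow> R k \<in> pauli_group1"
    and fixed: "apply_op n (kron n R) (sign_twist q (uniform_state S)) = sign_twist q (uniform_state S)"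
  shows "map (\<lambda>k. R k True False \<noteq> 0) [0..<n] \<in> S"
proof -
  define \<alpha> where "\<alpha> = map (\<lambda>k. R k True False \<noteq> 0) [0..<n]"
  have len_\<alpha>: "length \<alpha> = n" and nth_\<alpha>: "\<And>k. k < n \<Longrightarrow> \<alpha>!k = (R k True False \<noteq> 0)"
    by (simp_all add: \<alpha>_def)
  have "monomial1 (\<alpha>!k) (R k)" if "k < n" for k
    using pauli_group1_monomial(1)[OF R[OF that]] nth_\<alpha>[OF that] by simp
  then have "apply_op n (kron n R) (sign_twist q (uniform_state S)) \<alpha>
      = (\<Prod>k<n. R k (\<alpha>!k) (\<alpha>!k \<noteq> \<alpha>!k)) * sign_twist q (uniform_state S) (bxor \<alpha> \<alpha>)"
    by (rule apply_op_kron_monomial[OF _ len_\<alpha> len_\<alpha>])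
  then have "sign_twist q (uniform_state S) \<alpha>
      = (\<Prod>k<n. R k (\<alpha>!k) False) * sign_twist q (uniform_state S) (replicate n False)"
    using fixed by (simp add: bxor_self len_\<alpha>)
  moreover have "R k (\<alpha>!k) False \<noteq> 0" if "k < n" for k
    using pauli_group1_monomial(2)[OF R[OF that], of False] nth_\<alpha>[OF that] by simp
  then have "(\<Prod>k<n. R k (\<alpha>!k) False) \<noteq> 0" by simp
  moreover have "sign_twist q (uniform_state S) (replicate n False) \<noteq> 0"
    using zero_in_S amplitude_nonzero by (simp add: sign_twist_uniform_state)
  ultimately have "sign_twist q (uniform_state S) \<alpha> \<noteq> 0" by simp
  then show ?thesis by (simp add: \<alpha>_def sign_twist_uniform_state split: if_splits)
qed

text \<open>If a local Clifford operator maps \<open>|S\<rangle>\<close> to its sign twist, it conjugates the stabilizer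
  \<open>Z\<^sup>b\<close> (\<open>b \<in> P\<close>) to a stabilizer \<open>X\<^sup>\<alpha> Z\<^sup>\<beta>\<close> of the twisted state. As \<open>\<alpha>\<close> is supported
  inside \<open>b\<close>, a light enough \<open>b\<close> forces \<open>\<alpha> = 0\<close>, i.e.\ \<open>U\<^sub>j Z U\<^sub>j\<^sup>\<dagger>\<close> is diagonal wherever \<open>b\<^sub>j = 1\<close>.\<close>
lemma LC_sign_twist_monomial:
  assumes C: "\<forall>k<n. clifford1 (Us k)"
    and map: "apply_op n (kron n Us) (uniform_state S) = sign_twist q (uniform_state S)"
    and b: "b \<in> P" "b ! j" "j < n"
    and light: "\<And>a. a \<in> S \<Longrightarrow> a \<noteq> replicate n False \<Longrightarrow> hamming_weight b < hamming_weight a"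
  shows "\<exists>e. monomial1 e (Us j)"
proof -
  have U: "\<forall>k<n. unitary1 (Us k)" using C by (simp add: clifford1_def)
  define R where "R k = conj1 (Us k) (pauli_xz1 False (b!k))" for k
  have R: "R k \<in> pauli_group1" if "k < n" for k
    using C that pauli_xz1_in_pauli_group1 by (simp add: R_def clifford1_conj1_pauli)
  define \<alpha> where "\<alpha> = map (\<lambda>k. R k True False \<noteq> 0) [0..<n]"
  have "pauli_xz n (replicate n False) b = kron n (\<lambda>k. pauli_xz1 False (b!k))"
    unfolding pauli_xz_def by (rule kron_cong) simp
  then have "apply_op n (kron n R) (sign_twist q (uniform_state S)) = sign_twist q (uniform_state S)"
    unfolding R_def
    using apply_op_kron_conj1[OF U map] uniform_state_stabilized[OF zero_in_S b(1)] by simp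
  then have "\<alpha> \<in> S" unfolding \<alpha>_def using R by (rule X_part_of_stabilizer_in_S[rotated])
  moreover have "hamming_weight \<alpha> \<le> hamming_weight b"
  proof (rule hamming_weight_mono)
    fix k assume k: "k < length \<alpha>" "\<alpha> ! k"
    have "pauli_xz1 False False = id1" by (auto simp: pauli_xz1_def id1_def fun_eq_iff)
    show "b ! k"
    proof (rule ccontr)
      assume "\<not> b ! k"
      then have "R k = id1" using U k(1) \<open>pauli_xz1 False False = id1\<close> by (simp add: R_def conj1_id1 \<alpha>_def)
      then show False using k by (simp add: \<alpha>_def id1_def)
    qed
  qed (use length_P b(1) in \<open>simp add: \<alpha>_def\<close>)
  ultimately have "\<alpha> = replicate n False" using light by fastforce
  then have "\<not> \<alpha> ! j" using b(3) by simp
  then have "R j True False = 0" using b(3) unfolding \<alpha>_def by simp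
  moreover have "pauli_xz1 False True = pauliZ" by (auto simp: pauli_xz1_def pauliZ_def fun_eq_iff)
  then have "R j = conj1 (Us j) pauliZ" using b(2) by (simp add: R_def)
  ultimately have "conj1 (Us j) pauliZ u v = 0" if "u \<noteq> v" for u v
    using pauli_group1_monomial(1)[OF R[OF b(3)]] that by (simp add: monomial1_def)
  then show ?thesis using U b(3) unitary1_monomial_if_conj1_Z_diagonal by blast
qed

lemma LC_sign_twist_phase_product:
  assumes map: "apply_op n (kron n Us) (uniform_state S) = sign_twist q (uniform_state S)"
    and M: "\<And>k. k < n \<Longrightarrow> monomial1 (E!k) (Us k)" and len_E: "length E = n"
    and y: "y \<in> S"
  shows "parity_sign (q y) = (\<Prod>k<n. Us k (y!k) (y!k \<noteq> E!k))"
proof -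
  have "apply_op n (kron n Us) (uniform_state S) y
      = (\<Prod>k<n. Us k (y!k) (y!k \<noteq> E!k)) * uniform_state S (bxor y E)"
    by (rule apply_op_kron_monomial) (use M len_E length_S y in auto)
  then have eq: "parity_sign (q y) * amplitude = (\<Prod>k<n. Us k (y!k) (y!k \<noteq> E!k)) * uniform_state S (bxor y E)"
    using map y by (simp add: sign_twist_uniform_state)
  then have "uniform_state S (bxor y E) = amplitude"
    using amplitude_nonzero by (auto simp: uniform_state_eq split: if_splits)
  then show ?thesis using eq amplitude_nonzero by simp
qed

end

text \<open>A list of codewords \<open>y \<in> S\<close> with multiplicities \<open>l\<close> such that every coordinate is
  covered a multiple of four times while \<open>q\<close> is odd an odd number of times. It rules out
  writing \<open>(-1)\<^sup>q\<^sup>(\<^sup>y\<^sup>)\<close> on \<open>S\<close> as \<open>\<Prod>\<^sub>k d\<^sub>k(y\<^sub>k)\<close> with \<open>d\<^sub>k(1)\<^sup>4 = d\<^sub>k(0)\<^sup>4\<close>.\<close>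
definition phase_parity_certificate ::
    "nat \<Rightarrow> bool list set \<Rightarrow> (bool list \<Rightarrow> bool) \<Rightarrow> (bool list \<times> nat) list \<Rightarrow> bool" where
  "phase_parity_certificate n S q cert \<longleftrightarrow>
     (\<forall>(y, l)\<in>set cert. y \<in> S) \<and>
     (\<forall>k<n. 4 dvd sum_list (map (\<lambda>(y, l). if y!k then l else 0) cert)) \<and>
     odd (sum_list (map (\<lambda>(y, l). if q y then l else 0) cert))"

lemma prod_list_map_prod:
  fixes f :: "nat \<Rightarrow> 'b \<Rightarrow> complex"
  shows "prod_list (map (\<lambda>(y, l). (\<Prod>k\<in>K. f k y) ^ l) xs) = (\<Prod>k\<in>K. prod_list (map (\<lambda>(y, l). f k y ^ l) xs))"
proof (induction xs)
  case (Cons p xs) then show ?case by (cases p) (simp add: prod.distrib prod_power_distrib)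
qed simp

lemma prod_list_map_power_nth:
  fixes f :: "bool \<Rightarrow> complex"
  shows "prod_list (map (\<lambda>(y, l). f (y!k) ^ l) xs)
       = f True ^ sum_list (map (\<lambda>(y, l). if y!k then l else 0) xs)
         * f False ^ sum_list (map (\<lambda>(y, l). if y!k then 0 else l) xs)"
proof (induction xs)
  case (Cons p xs) then show ?case by (cases p) (auto simp: power_add mult_ac)
qed simp

lemma prod_list_map_parity_sign:
  "prod_list (map (\<lambda>(y, l). parity_sign (q y) ^ l) xs) = (-1) ^ sum_list (map (\<lambda>(y, l). if q y then l else 0) xs)"
proof (induction xs)
  case (Cons p xs) then show ?case by (cases p) (auto simp: parity_sign_def power_add)
qed simp

lemma phase_parity_certificate_contradiction:
  fixes d :: "nat \<Rightarrow> bool \<Rightarrow> complex"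
  assumes cert: "phase_parity_certificate n S q cert"
    and product: "\<And>y. y \<in> S \<Longrightarrow> parity_sign (q y) = (\<Prod>k<n. d k (y!k))"
    and quarter: "\<And>k. k < n \<Longrightarrow> d k True ^ 4 = d k False ^ 4"
    and zero: "replicate n False \<in> S" "\<not> q (replicate n False)"
  shows False
proof -
  let ?total = "sum_list (map snd cert)"
  let ?hits = "\<lambda>k. sum_list (map (\<lambda>(y, l). if y!k then l else 0) cert)"
  have split: "?hits k + sum_list (map (\<lambda>(y, l). if y!k then 0 else l) cert) = ?total" for k
    by (simp add: sum_list_addf[symmetric] case_prod_unfold if_distrib cong: if_cong)
  have "(-1) ^ sum_list (map (\<lambda>(y, l). if q y then l else 0) cert)
      = prod_list (map (\<lambda>(y, l). (\<Prod>k<n. d k (y!k)) ^ l) cert)"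
    using cert product
    by (auto simp: phase_parity_certificate_def prod_list_map_parity_sign[symmetric]
        intro!: arg_cong[where f=prod_list] map_cong)
  also have "\<dots> = (\<Prod>k<n. d k False ^ ?total)"
    unfolding prod_list_map_prod
  proof (rule prod.cong)
    fix k assume "k \<in> {..<n}"
    then have "4 dvd ?hits k" using cert by (simp add: phase_parity_certificate_def)
    then have "d k True ^ ?hits k = d k False ^ ?hits k"
      using quarter[of k] \<open>k \<in> {..<n}\<close> by (auto simp: power_mult elim!: dvdE)
    then show "prod_list (map (\<lambda>(y, l). d k (y!k) ^ l) cert) = d k False ^ ?total"
      by (simp add: prod_list_map_power_nth power_add[symmetric] split)
  qed simp
  also have "\<dots> = parity_sign (q (replicate n False)) ^ ?total"
    using product[OF zero(1)] by (simp add: prod_power_distrib)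
  also have "\<dots> = 1" using zero(2) by simp
  finally show False using cert by (simp add: phase_parity_certificate_def)
qed

context dual_subspaces
begin

theorem not_LC_equiv_sign_twist:
  assumes cover: "\<And>j. j < n \<Longrightarrow> \<exists>b\<in>P. b ! j \<and>
                     (\<forall>a\<in>S. a \<noteq> replicate n False \<longrightarrow> hamming_weight b < hamming_weight a)"
    and cert: "phase_parity_certificate n S q cert" and q_zero: "\<not> q (replicate n False)"
  shows "\<not> LC_equiv n (uniform_state S) (sign_twist q (uniform_state S))"
proof
  assume "LC_equiv n (uniform_state S) (sign_twist q (uniform_state S))"
  then obtain Us where C: "\<forall>k<n. clifford1 (Us k)"
    and map: "apply_op n (kron n Us) (uniform_state S) = sign_twist q (uniform_state S)"
    by (auto simp: LC_equiv_def)
  have "\<exists>e. monomial1 e (Us k)" if "k < n" for k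
    using cover[OF that] LC_sign_twist_monomial[OF C map _ _ that] by blast
  then obtain E where E: "\<And>k. k < n \<Longrightarrow> monomial1 (E k) (Us k)" by metis
  define d where "d k a = Us k a (a \<noteq> E k)" for k a
  have "parity_sign (q y) = (\<Prod>k<n. d k (y!k))" if "y \<in> S" for y
    using LC_sign_twist_phase_product[OF map, of "map E [0..<n]"] E that by (simp add: d_def)
  moreover have "d k True ^ 4 = d k False ^ 4" if "k < n" for k
    using clifford1_monomial_ratio C E that by (simp add: d_def)
  ultimately show False
    using phase_parity_certificate_contradiction[OF cert] zero_in_S q_zero by blast
qed

end

section \<open>The 27-qubit counterexample\<close>

lemma length_xi: "length xi = 6" "\<forall>v\<in>set xi. length v = 27"
  by (simp_all add: xi_def bits_def)

definition dual_generators :: "bool list list" where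
  "dual_generators = map bits
    [''100110000000000000000000000'',
     ''010101000000000000000000000'',
     ''001100100000000000000000000'',
     ''111000011000000000000000000'',
     ''001000010100000000000000000'',
     ''110000010010000000000000000'',
     ''010000010001000000000000000'',
     ''101000010000100000000000000'',
     ''011100010000010000000000000'',
     ''100100010000001000000000000'',
     ''111000000000000110000000000'',
     ''000100000000000101000000000'',
     ''111100000000000100100000000'',
     ''001000010000000100010000000'',
     ''010000010000000100001000000'',
     ''011000010000000100000100000'',
     ''111000010000000100000010000'',
     ''110100010000000100000001000'',
     ''101100010000000100000000100'',
     ''100100010000000100000000010'',
     ''000100010000000100000000001'']"

definition S27_dual :: "bool list set" where
  "S27_dual = f2_span 27 dual_generators"

lemma length_dual_generators: "length dual_generators = 21" "\<forall>v\<in>set dual_generators. length v = 27"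
  by (simp_all add: dual_generators_def bits_def)

definition S27_list :: "bool list list" where
  "S27_list = map (\<lambda>cs. f2_comb 27 cs xi) (List.n_lists 6 [False, True])"

lemma S27_eq_set: "S27 = set S27_list"
  by (auto simp: S27_def S27_list_def f2_span_eq set_n_lists length_xi)

text \<open>Coordinates on which the codewords of \<open>S27\<close> are free; each dual generator is
  supported on these pivots together with one coordinate of its own.\<close>
definition pivots :: "nat list" where "pivots = [0, 1, 2, 3, 7, 15]"

definition nonpivots :: "nat list" where
  "nonpivots = [4, 5, 6, 8, 9, 10, 11, 12, 13, 14, 16, 17, 18, 19, 20, 21, 22, 23, 24, 25, 26]"

lemma dual_generators_orthogonal: "\<forall>u\<in>set dual_generators. \<forall>v\<in>set xi. \<not> bdot u v"
  by code_simp

lemma xi_independent: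
  "\<forall>cs\<in>set (List.n_lists 6 [False, True]). f2_comb 27 cs xi = replicate 27 False \<longrightarrow> cs = replicate 6 False"
  by code_simp

lemma dual_generators_at_nonpivots:
  "\<forall>k<21. map (\<lambda>v. v ! (nonpivots ! k)) dual_generators = (replicate 21 False)[k := True]"
  by code_simp

lemma pivots_attained: "\<forall>p\<in>set (List.n_lists 6 [False, True]). \<exists>s\<in>set S27_list. map (nth s) pivots = p"
  by code_simp

lemma dual_generators_support:
  "\<forall>k<21. \<forall>j<27. dual_generators ! k ! j \<longrightarrow> j \<in> set pivots \<or> j = nonpivots ! k"
  by code_simp

lemma pivots_nonpivots: "\<forall>j<27. j \<in> set pivots \<or> j \<in> set nonpivots"
  and length_pivots: "length pivots = 6" and length_nonpivots: "length nonpivots = 21"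
  and pivots_less: "\<forall>j\<in>set pivots. j < 27" and nonpivots_less: "\<forall>j\<in>set nonpivots. j < 27"
  by code_simp+

lemma nth_f2_comb_dual_generators:
  assumes "length ds = 21" "k < 21"
  shows "f2_comb 27 ds dual_generators ! (nonpivots ! k) = ds ! k"
  using assms dual_generators_at_nonpivots length_dual_generators nonpivots_less length_nonpivots
  by (simp add: nth_f2_comb bdot_unit_vector)

lemma card_S27: "card S27 = 64"
  unfolding S27_def
  using card_f2_span_independent[OF length_xi(2)] xi_independent length_xi(1)
  by (simp add: set_n_lists UNIV_bool[symmetric])

lemma card_S27_dual: "card S27_dual = 2 ^ 21"
proof -
  have "ds = replicate 21 False"
    if "length ds = 21" "f2_comb 27 ds dual_generators = replicate 27 False" for ds
  proof (rule nth_equalityI)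
    fix k assume "k < length ds"
    then show "ds ! k = replicate 21 False ! k"
      using that nth_f2_comb_dual_generators[of ds k] nonpivots_less length_nonpivots by simp
  qed (use that in simp)
  then show ?thesis
    unfolding S27_dual_def using length_dual_generators
    by (subst card_f2_span_independent) simp_all
qed

lemma bdot_dual_generator:
  assumes z: "length z = 27" "\<And>j. j \<in> set pivots \<Longrightarrow> \<not> z ! j" and k: "k < 21"
  shows "bdot (dual_generators ! k) z = z ! (nonpivots ! k)"
proof (rule bdot_single_overlap)
  show "length (dual_generators ! k) = length z" "nonpivots ! k < length (dual_generators ! k)"
    using length_dual_generators nonpivots_less length_nonpivots z(1) k by simp_all
  show "dual_generators ! k ! (nonpivots ! k)"
    using dual_generators_at_nonpivots k length_dual_generators
    by (metis length_replicate nth_list_update_eq nth_map)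
  fix j assume "j < length (dual_generators ! k)" "dual_generators ! k ! j" "z ! j"
  moreover from this have "j < 27" using length_dual_generators k by simp
  ultimately show "j = nonpivots ! k" using dual_generators_support z(2) k by blast
qed

lemma annihilator_S27_dual:
  assumes y: "length y = 27" and orth: "\<And>b. b \<in> S27_dual \<Longrightarrow> \<not> bdot b y"
  shows "y \<in> S27"
proof -
  have "map (nth y) pivots \<in> set (List.n_lists 6 [False, True])"
    using length_pivots by (simp add: set_n_lists UNIV_bool[symmetric])
  then obtain s where s: "s \<in> S27" "map (nth s) pivots = map (nth y) pivots"
    using pivots_attained S27_eq_set by metis
  have len_s: "length s = 27"
    using s(1) f2_subspace_span[OF length_xi(2)] by (auto simp: S27_def f2_subspace_def bitstrings_def)
  let ?z = "bxor y s"
  have z_pivot: "\<not> ?z ! j" if "j \<in> set pivots" for j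
    using s(2) that pivots_less y len_s by (auto simp: list_eq_iff_nth_eq in_set_conv_nth)
  have z_nonpivot: "\<not> ?z ! (nonpivots ! k)" if k: "k < 21" for k
  proof -
    have b: "dual_generators ! k \<in> S27_dual"
      using f2_span_generator[OF length_dual_generators(2)] length_dual_generators k
      by (simp add: S27_dual_def)
    have "\<not> bdot (dual_generators ! k) s"
      using orthogonal_f2_span[OF length_dual_generators(2) length_xi(2) dual_generators_orthogonal]
        b s(1) by (simp add: S27_def S27_dual_def)
    then have "\<not> bdot (dual_generators ! k) ?z"
      using orth[OF b] y len_s by (simp add: bdot_bxor_right)
    then show ?thesis using bdot_dual_generator[of ?z k] z_pivot y len_s k by simp
  qed
  have "?z = replicate 27 False"
  proof (rule nth_equalityI)
    fix j assume "j < length ?z"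
    then have j: "j < 27" using y len_s by simp
    then consider "j \<in> set pivots" | k where "k < 21" "j = nonpivots ! k"
      using pivots_nonpivots length_nonpivots by (metis in_set_conv_nth)
    then show "?z ! j = replicate 27 False ! j"
      by cases (use z_pivot z_nonpivot j in simp_all)
  qed (use y len_s in simp)
  then have "y = s" using y len_s by (auto simp: list_eq_iff_nth_eq)
  then show ?thesis using s(1) by simp
qed

interpretation S27: dual_subspaces 27 S27 S27_dual
proof
  show "f2_subspace 27 S27" unfolding S27_def by (rule f2_subspace_span[OF length_xi(2)])
  show "f2_subspace 27 S27_dual" unfolding S27_dual_def by (rule f2_subspace_span[OF length_dual_generators(2)])
  show "\<not> bdot b a" if "a \<in> S27" "b \<in> S27_dual" for a b
    using orthogonal_f2_span[OF length_dual_generators(2) length_xi(2) dual_generators_orthogonal] that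
    by (simp add: S27_def S27_dual_def)
  show "card S27 * card S27_dual = 2 ^ 27" by (simp add: card_S27 card_S27_dual)
qed (rule annihilator_S27_dual)

text \<open>Entry \<open>k\<close> of \<open>Q27_polar a\<close> is \<open>\<partial>Q/\<partial>x\<^sub>k\<close> at \<open>a\<close>, so that
  \<open>Q(x + a) = Q(x) + Q(a) + Q27_polar a \<cdot> x\<close>.\<close>
definition Q27_polar :: "bool list \<Rightarrow> bool list" where
  "Q27_polar a =
    [(a!1 \<noteq> a!2) \<noteq> a!7, ((a!0 \<noteq> a!3) \<noteq> a!7) \<noteq> a!15, ((a!0 \<noteq> a!3) \<noteq> a!7) \<noteq> a!15,
     (a!1 \<noteq> a!2) \<noteq> a!7, False, False, False, (((a!0 \<noteq> a!1) \<noteq> a!2) \<noteq> a!3) \<noteq> a!15,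
     False, False, False, False, False, False, False, (a!1 \<noteq> a!2) \<noteq> a!7,
     False, False, False, False, False, False, False, False, False, False, False]"

lemma odd_length_filter_id: "odd (length (filter id xs)) = foldr (\<noteq>) xs False"
  by (induction xs) auto

lemma length_27_cases:
  assumes "length x = 27"
  obtains x0 x1 x2 x3 x4 x5 x6 x7 x8 x9 x10 x11 x12 x13 x14 x15 x16 x17 x18 x19 x20 x21 x22 x23 x24 x25 x26
  where "x = [x0, x1, x2, x3, x4, x5, x6, x7, x8, x9, x10, x11, x12, x13, x14, x15, x16, x17, x18,
              x19, x20, x21, x22, x23, x24, x25, x26]"
  using assms by (auto simp: length_Suc_conv numeral_eq_Suc)

lemma Q27_bxor:
  assumes "length x = 27" "length a = 27"
  shows "Q27 (bxor x a) = ((Q27 x \<noteq> Q27 a) \<noteq> bdot (Q27_polar a) x)"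
proof -
  obtain x0 x1 x2 x3 x4 x5 x6 x7 x8 x9 x10 x11 x12 x13 x14 x15 x16 x17 x18 x19 x20 x21 x22 x23 x24 x25 x26
    where x: "x = [x0, x1, x2, x3, x4, x5, x6, x7, x8, x9, x10, x11, x12, x13, x14, x15, x16, x17, x18,
                   x19, x20, x21, x22, x23, x24, x25, x26]"
    using length_27_cases[OF assms(1)] .
  obtain a0 a1 a2 a3 a4 a5 a6 a7 a8 a9 a10 a11 a12 a13 a14 a15 a16 a17 a18 a19 a20 a21 a22 a23 a24 a25 a26
    where a: "a = [a0, a1, a2, a3, a4, a5, a6, a7, a8, a9, a10, a11, a12, a13, a14, a15, a16, a17, a18,
                   a19, a20, a21, a22, a23, a24, a25, a26]"
    using length_27_cases[OF assms(2)] .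
  show ?thesis
    unfolding x a Q27_def bdot_def odd_length_filter_id Q27_polar_def bxor_def
    by simp argo
qed

lemma quadratic_form_Q27: "quadratic_form 27 Q27"
  unfolding quadratic_form_def
  by (intro exI[of _ Q27_polar]) (simp add: Q27_bxor Q27_polar_def)

text \<open>Exponents \<open>c\<^sub>j\<close> of the phase gates \<open>diag (1, cis (\<pi> c\<^sub>j / 4))\<close> that map
  \<open>|S\<rangle>\<close> to \<open>|Q,S\<rangle>\<close>.\<close>
definition phase_exponents :: "nat list" where
  "phase_exponents = [1, 5, 5, 5, 5, 5, 5, 1, 1, 1, 1, 1, 1, 1, 7, 7, 5, 7, 3, 7, 7, 3, 7, 1, 1, 7, 1]"

lemma phase_exponents_S27:
  "\<forall>y\<in>set S27_list. (\<Sum>j<27. if y!j then phase_exponents!j else 0) mod 8 = (if Q27 y then 4 else 0)"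
  by code_simp

lemma cis_quarter_pi_mod_8: "cis (pi / 4 * real m) = cis (pi / 4 * real (m mod 8))"
proof -
  have "real m = real (m mod 8) + 8 * real (m div 8)"
    by (metis mod_div_mult_eq of_nat_add of_nat_mult of_nat_numeral mult.commute)
  then have m: "pi / 4 * real m = pi / 4 * real (m mod 8) + 2 * pi * real (m div 8)"
    by (simp add: algebra_simps)
  have "cis (2 * pi * real (m div 8)) = 1" by (rule cis_multiple_2pi) (simp add: Ints_of_nat)
  then show ?thesis unfolding m cis_mult[symmetric] by simp
qed

lemma ket_S_eq: "ket_S = uniform_state S27"
  by (simp add: ket_S_def uniform_state_def)

lemma ket_QS_eq: "ket_QS = sign_twist Q27 ket_S"
  by (simp add: ket_QS_def ket_S_def sign_twist_def parity_sign_def fun_eq_iff)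

lemma LU_equiv_ket_S_ket_QS: "LU_equiv 27 ket_S ket_QS"
proof -
  let ?\<theta> = "\<lambda>j. pi / 4 * real (phase_exponents ! j)"
  have "cis (\<Sum>j<27. if y!j then ?\<theta> j else 0) * ket_S y = ket_QS y" for y
  proof (cases "y \<in> S27")
    case True
    let ?m = "\<Sum>j<27. if y!j then phase_exponents!j else 0"
    have sum: "(\<Sum>j<27. if y!j then ?\<theta> j else 0) = pi / 4 * real ?m"
      unfolding of_nat_sum sum_distrib_left by (intro sum.cong) auto
    have "?m mod 8 = (if Q27 y then 4 else 0)"
      using True phase_exponents_S27 by (simp add: S27_eq_set)
    then have "cis (pi / 4 * real ?m) = parity_sign (Q27 y)"
      using cis_quarter_pi_mod_8[of ?m] by (simp add: parity_sign_def)
    then have "cis (\<Sum>j<27. if y!j then ?\<theta> j else 0) = parity_sign (Q27 y)"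
      unfolding sum .
    then show ?thesis by (simp add: ket_QS_eq sign_twist_def)
  qed (simp add: ket_QS_eq ket_S_eq sign_twist_def uniform_state_def)
  then show ?thesis
    using LU_equiv_phase_gates[of 27 ket_S ?\<theta>] S27.is_state_uniform_state by (simp add: ket_S_eq)
qed

lemma light_dual_codewords:
  "\<forall>j<27. \<exists>b\<in>set dual_generators. b ! j \<and> hamming_weight b \<le> 6"
  by code_simp

lemma heavy_codewords: "\<forall>s\<in>set S27_list. s \<noteq> replicate 27 False \<longrightarrow> 12 \<le> hamming_weight s"
  by code_simp

lemma S27_dual_cover:
  assumes "j < 27"
  shows "\<exists>b\<in>S27_dual. b ! j \<and> (\<forall>a\<in>S27. a \<noteq> replicate 27 False \<longrightarrow> hamming_weight b < hamming_weight a)"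
proof -
  obtain b where b: "b \<in> set dual_generators" "b ! j" "hamming_weight b \<le> 6"
    using light_dual_codewords assms by blast
  then have "b \<in> S27_dual"
    using f2_span_generator[OF length_dual_generators(2)] by (auto simp: S27_dual_def in_set_conv_nth)
  moreover have "hamming_weight b < hamming_weight a" if "a \<in> S27" "a \<noteq> replicate 27 False" for a
    using heavy_codewords that b(3) by (fastforce simp: S27_eq_set)
  ultimately show ?thesis using b(2) by blast
qed

definition certificate27 :: "(bool list \<times> nat) list" where
  "certificate27 =
   [(bits ''000000000000000111111111111'', 1),
    (bits ''000111100000011001100001111'', 3),
    (bits ''000111111111100001111110000'', 1),
    (bits ''001000101100110101001001011'', 1),
    (bits ''001000110011001010101001011'', 3),
    (bits ''001111001100101011010111011'', 3),
    (bits ''001111010011010011001000100'', 1),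
    (bits ''010001001011010101010000111'', 3),
    (bits ''010001010100101010110000111'', 1),
    (bits ''010110101011001100110001000'', 1),
    (bits ''010110110100110100101110111'', 3),
    (bits ''011001100111100000011001100'', 3),
    (bits ''100010001010101101011100001'', 3),
    (bits ''100010010101010010111100001'', 3),
    (bits ''101010100110011000010101010'', 1),
    (bits ''110011000001111000001100110'', 1)]"

lemma phase_parity_certificate27: "phase_parity_certificate 27 S27 Q27 certificate27"
  unfolding phase_parity_certificate_def S27_eq_set by code_simp

theorem mainTheorem1:
  shows "stabilizer_state 27 ket_S \<and> stabilizer_state 27 ket_QS \<and>
         LU_equiv 27 ket_S ket_QS \<and> \<not> LC_equiv 27 ket_S ket_QS \<and>
         \<not> (\<forall>n \<psi> \<phi>. stabilizer_state n \<psi> \<and> stabilizer_state n \<phi> \<and> LU_equiv n \<psi> \<phi>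
                 \<longrightarrow> LC_equiv n \<psi> \<phi>)"
proof -
  have stab_S: "stabilizer_state 27 ket_S"
    unfolding ket_S_eq by (rule S27.stabilizer_state_uniform_state)
  have stab_QS: "stabilizer_state 27 ket_QS"
    unfolding ket_QS_eq by (rule stabilizer_state_sign_twist[OF stab_S quadratic_form_Q27])
  have not_LC: "\<not> LC_equiv 27 ket_S ket_QS"
    unfolding ket_QS_eq ket_S_eq
    using S27.not_LC_equiv_sign_twist[OF S27_dual_cover phase_parity_certificate27
        quadratic_form_zero[OF quadratic_form_Q27]] .
  show ?thesis using stab_S stab_QS LU_equiv_ket_S_ket_QS not_LC by blast
qed

end
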